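(* Let $l\ge1$ be an integer and $(a_0,\dots,a_{l-1})\in\mathbb{R}^l$, and set $a_l:=1$. Consider the planar system given in polar coordinates $(\rho,\varphi)$ by $$\dot\rho=-\rho\left(\rho^{-2l}+\sum_{j=0}^{l-1}a_j\rho^{-2j}\right),\qquad\dot\varphi=1,$$ and let $\Gamma$ be a part of a trajectory of this system near infinity (an unbounded spiral piece lying at positive distance from the origin). (a) If $a_0\neq0$, then $\Gamma$ is of exponential type, namely comparable with the spiral $\rho=e^{-a_0\varphi}$, and $\dim_B\Gamma=1$. (b) If $1\le k\le l$ is fixed and $a_0=\dots=a_{k-1}=0$, $a_k\neq0$, then $\Gamma$ is comparable with the spiral $\rho=|\varphi|^{1/(2k)}$, and $$\dim_B\Gamma=\frac{4k}{2k+1}.$$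
   Context: This system is obtained from the Hopf–Takens normal form $\dot r=r(r^{2l}+\sum_{j=0}^{l-1}a_jr^{2j})$, $\dot\varphi=1$ by $\rho=1/r$. A spiral $\rho=F(\varphi)$ is comparable with $\rho=G(\varphi)$ if there are constants $c_1,c_2>0$ with $c_1G(\varphi)\le F(\varphi)\le c_2G(\varphi)$ for all $\varphi$ in the end of the range of angles along which the spiral tends to infinity. For a nonempty bounded $B\subset\mathbb{R}^2$, with $B_\varepsilon$ its $\varepsilon$-neighbourhood and $|B_\varepsilon|$ its area, $\overline{\dim}_BB=\inf\{s:\limsup_{\varepsilon\to0}|B_\varepsilon|/\varepsilon^{2-s}=0\}$, $\underline{\dim}_BB$ the same with $\liminf$, $\dim_BB$ their common value; for an unbounded $A\subset\mathbb{R}^2$ with $0\notin\overline A$, $\dim_BA:=\dim_B\Phi(A)$, $\Phi(x)=x/|x|^2$. *)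

theory Defs
  imports "HOL-Analysis.Analysis"
begin

definition eps_nbhd :: "complex set \<Rightarrow> real \<Rightarrow> complex set" where
  "eps_nbhd B \<epsilon> = (\<Union>x\<in>B. ball x \<epsilon>)"

definition upper_box_dim :: "complex set \<Rightarrow> real" where
  "upper_box_dim B = Inf {s::real. Limsup (at_right 0)
      (\<lambda>\<epsilon>. ereal (measure lebesgue (eps_nbhd B \<epsilon>) / \<epsilon> powr (2 - s))) = 0}"

definition lower_box_dim :: "complex set \<Rightarrow> real" where
  "lower_box_dim B = Inf {s::real. Liminf (at_right 0)
      (\<lambda>\<epsilon>. ereal (measure lebesgue (eps_nbhd B \<epsilon>) / \<epsilon> powr (2 - s))) = 0}"

text \<open>Inversion Phi(x) = x / |x|^2, used to define the box dimension of unbounded sets.\<close>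
definition inversion :: "complex \<Rightarrow> complex" where
  "inversion z = z / complex_of_real ((cmod z)\<^sup>2)"

definition comparable :: "(real \<Rightarrow> real) \<Rightarrow> (real \<Rightarrow> real) \<Rightarrow> real filter \<Rightarrow> bool" where
  "comparable F G L \<longleftrightarrow> (\<exists>c1 c2. c1 > 0 \<and> c2 > 0 \<and>
      (\<forall>\<^sub>F \<phi> in L. c1 * G \<phi> \<le> F \<phi> \<and> F \<phi> \<le> c2 * G \<phi>))"

end

theory Submission
  imports Defs "HOL-Real_Asymp.Real_Asymp"
begin

text \<open>
  With \<open>r = 1/\<rho>\<close> the system becomes the Hopf--Takens normal form
  \<open>r' = r (a\<^sub>0 + a\<^sub>1 r^2 + \<dots> + a\<^sub>l r^(2l))\<close>, and the inversion maps \<open>\<Gamma>\<close> onto the spiral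
  \<open>r = r(\<phi>)\<close> around the origin. Because \<open>\<Gamma>\<close> escapes to infinity, \<open>r\<close> gets arbitrarily small, which
  forces the first nonzero coefficient \<open>a\<^sub>k\<close> to be negative; then \<open>r\<close> stays small for good. If
  \<open>k = 0\<close>, \<open>log (1/r)\<close> grows at rate \<open>-a\<^sub>0\<close> up to an integrable error, so \<open>r \<asymp> exp (a\<^sub>0 \<phi>)\<close>;
  if \<open>k \<ge> 1\<close>, \<open>r^(-2k)\<close> grows linearly, so \<open>r \<asymp> \<phi>^(-\<alpha>)\<close> with \<open>\<alpha> = 1/(2k)\<close>.

  An exponential spiral is, up to a
  disc of radius \<open>O(\<epsilon>)\<close>, a curve of length \<open>O(log (1/\<epsilon>))\<close>: dimension 1. For \<open>r \<asymp> \<phi>^(-\<alpha>)\<close>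
  consecutive turns come closer than \<open>2\<epsilon>\<close> beyond \<open>\<phi> \<asymp> \<epsilon>^(-1/(1+\<alpha>))\<close>, so the neighbourhood
  contains a disc of area \<open>\<asymp> \<epsilon>^(2\<alpha>/(1+\<alpha>))\<close>, while the curve up to that angle, reparametrised by
  \<open>\<phi>^(1-\<alpha>)\<close>, is Lipschitz of length \<open>\<asymp> \<epsilon>^((\<alpha>-1)/(1+\<alpha>))\<close>; this gives dimension
  \<open>2/(1+\<alpha>) = 4k/(2k+1)\<close>. Angles tending to \<open>-\<infinity>\<close> reduce to this case by \<open>\<phi> \<mapsto> -\<phi>\<close>, which
  changes the signs of the \<open>a\<^sub>j\<close> and conjugates the spiral.
\<close>

section \<open>Box dimension from the area of \<open>\<epsilon>\<close>-neighbourhoods\<close>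

lemma box_dim_eqI:
  fixes B :: "complex set"
  assumes upper: "\<And>s. s > d \<Longrightarrow>
      ((\<lambda>e. measure lebesgue (eps_nbhd B e) / e powr (2 - s)) \<longlongrightarrow> 0) (at_right 0)"
    and lower: "\<And>s. s < d \<Longrightarrow>
      filterlim (\<lambda>e. measure lebesgue (eps_nbhd B e) / e powr (2 - s)) at_top (at_right 0)"
  shows "lower_box_dim B = d \<and> upper_box_dim B = d"
proof -
  define f where "f s e = ereal (measure lebesgue (eps_nbhd B e) / e powr (2 - s))" for s e
  have above: "Limsup (at_right 0) (f s) = 0 \<and> Liminf (at_right 0) (f s) = 0" if "s > d" for s
  proof -
    have "(f s \<longlongrightarrow> ereal 0) (at_right 0)" unfolding f_def using upper[OF that] by (intro tendsto_ereal)
    then show ?thesis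
      using lim_imp_Limsup lim_imp_Liminf trivial_limit_at_right_real by (metis zero_ereal_def)
  qed
  have below: "Limsup (at_right 0) (f s) = \<infinity> \<and> Liminf (at_right 0) (f s) = \<infinity>" if "s < d" for s
  proof -
    have "(f s \<longlongrightarrow> \<infinity>) (at_right 0)" unfolding f_def using lower[OF that] by (subst tendsto_PInfty_eq_at_top)
    then show ?thesis using lim_imp_Limsup lim_imp_Liminf trivial_limit_at_right_real by metis
  qed
  have Inf_eq: "Inf S = d" if "\<And>s. s > d \<Longrightarrow> s \<in> S" and "\<And>s. s < d \<Longrightarrow> s \<notin> S" for S :: "real set"
  proof -
    have "S \<noteq> {}" using that(1)[of "d + 1"] by auto
    have "bdd_below S" unfolding bdd_below_def using that(2) by (meson not_le)
    have "d \<le> Inf S" using \<open>S \<noteq> {}\<close> that(2) by (intro cInf_greatest) (auto simp: not_less[symmetric])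
    moreover have "Inf S \<le> d + e" if "e > 0" for e
      using cInf_lower[OF _ \<open>bdd_below S\<close>] \<open>\<And>s. s > d \<Longrightarrow> s \<in> S\<close> that by simp
    ultimately show ?thesis by (meson field_le_epsilon order_antisym)
  qed
  show ?thesis unfolding lower_box_dim_def upper_box_dim_def f_def[symmetric]
    by (intro conjI Inf_eq) (use above below in auto)
qed

lemma eps_nbhd_ratio_tendsto_zero:
  assumes "eventually (\<lambda>e. measure lebesgue (eps_nbhd B e) \<le> U e) (at_right 0)"
    and "((\<lambda>e. U e / e powr (2 - s)) \<longlongrightarrow> 0) (at_right 0)"
  shows "((\<lambda>e. measure lebesgue (eps_nbhd B e) / e powr (2 - s)) \<longlongrightarrow> 0) (at_right 0)"
proof (rule tendsto_sandwich[OF _ _ tendsto_const assms(2)])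
  show "eventually (\<lambda>e. measure lebesgue (eps_nbhd B e) / e powr (2 - s) \<le> U e / e powr (2 - s)) (at_right 0)"
    using assms(1) by eventually_elim (auto intro: divide_right_mono)
qed auto

lemma eps_nbhd_ratio_at_top:
  assumes "eventually (\<lambda>e. V e \<le> measure lebesgue (eps_nbhd B e)) (at_right 0)"
    and "filterlim (\<lambda>e. V e / e powr (2 - s)) at_top (at_right 0)"
  shows "filterlim (\<lambda>e. measure lebesgue (eps_nbhd B e) / e powr (2 - s)) at_top (at_right 0)"
  by (rule filterlim_at_top_mono[OF assms(2)]) (use assms(1) in \<open>eventually_elim, auto intro: divide_right_mono\<close>)

lemma measure_ball_complex: "r \<ge> 0 \<Longrightarrow> measure lborel (ball (c::complex) r) = pi * r\<^sup>2"
  using content_ball[of r c] unit_ball_vol_even[of 1] by simp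

lemma eps_nbhd_open: "open (eps_nbhd B e)"
  unfolding eps_nbhd_def by auto

lemma eps_nbhd_sets: "eps_nbhd B e \<in> sets lebesgue"
  by (simp add: eps_nbhd_open borel_open)

lemma eps_nbhd_mono: "A \<subseteq> B \<Longrightarrow> eps_nbhd A e \<subseteq> eps_nbhd B e"
  unfolding eps_nbhd_def by auto

lemma eps_nbhd_Un: "eps_nbhd (A \<union> B) e = eps_nbhd A e \<union> eps_nbhd B e"
  unfolding eps_nbhd_def by auto

lemma eps_nbhd_subset_cball: "A \<subseteq> cball 0 R \<Longrightarrow> eps_nbhd A e \<subseteq> cball 0 (R + e)"
  unfolding eps_nbhd_def by (auto simp: subset_iff dist_norm) (smt (verit) norm_triangle_ineq3)

lemma eps_nbhd_lmeasurable:
  assumes "bounded B"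
  shows "eps_nbhd B e \<in> lmeasurable"
proof -
  obtain R where "B \<subseteq> cball 0 R" using assms by (auto simp: bounded_iff subset_iff)
  then show ?thesis
    by (meson bounded_cball bounded_set_imp_lmeasurable bounded_subset eps_nbhd_sets eps_nbhd_subset_cball)
qed

lemma measure_eps_nbhd_mono:
  "A \<subseteq> B \<Longrightarrow> bounded B \<Longrightarrow> measure lebesgue (eps_nbhd A e) \<le> measure lebesgue (eps_nbhd B e)"
  by (intro measure_mono_fmeasurable eps_nbhd_mono eps_nbhd_lmeasurable eps_nbhd_sets) auto

lemma measure_eps_nbhd_Un:
  "measure lebesgue (eps_nbhd (A \<union> B) e) \<le> measure lebesgue (eps_nbhd A e) + measure lebesgue (eps_nbhd B e)"
  unfolding eps_nbhd_Un by (rule measure_Un_le) (auto simp: eps_nbhd_sets)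

lemma measure_eps_nbhd_cball:
  assumes "e > 0"
  shows "measure lebesgue (eps_nbhd (cball 0 R) e) \<le> pi * (max 0 R + e)\<^sup>2"
proof -
  have "eps_nbhd (cball 0 R) e \<subseteq> ball 0 (max 0 R + e)"
    unfolding eps_nbhd_def by (auto simp: dist_norm) (smt (verit) norm_minus_commute norm_triangle_ineq2)
  then have "measure lebesgue (eps_nbhd (cball 0 R) e) \<le> measure lebesgue (ball (0::complex) (max 0 R + e))"
    by (intro measure_mono_fmeasurable eps_nbhd_sets) (auto intro: bounded_set_imp_lmeasurable)
  then show ?thesis using assms by (simp add: measure_ball_complex)
qed

text \<open>Covering by the \<open>2e\<close>-balls around the points of a grid of mesh \<open>e / L\<close>.\<close>
lemma measure_eps_nbhd_lipschitz_image:
  fixes f :: "real \<Rightarrow> complex"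
  assumes "a \<le> b" and "L > 0" and "e > 0"
    and lip: "\<And>x y. x \<in> {a..b} \<Longrightarrow> y \<in> {a..b} \<Longrightarrow> dist (f x) (f y) \<le> L * \<bar>x - y\<bar>"
  shows "measure lebesgue (eps_nbhd (f ` {a..b}) e) \<le> (L * (b - a) / e + 2) * (4 * pi * e\<^sup>2)"
proof -
  define h where "h = e / L"
  have h: "h > 0" "L * h = e" using assms by (auto simp: h_def)
  define n where "n = nat \<lceil>(b - a) / h\<rceil>"
  define c where "c j = f (a + real j * h)" for j :: nat
  have "eps_nbhd (f ` {a..b}) e \<subseteq> (\<Union>j\<le>n. ball (c j) (2 * e))"
  proof
    fix z assume "z \<in> eps_nbhd (f ` {a..b}) e"
    then obtain x where x: "x \<in> {a..b}" "dist (f x) z < e" unfolding eps_nbhd_def by auto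
    define j where "j = nat \<lfloor>(x - a) / h\<rfloor>"
    have "real j = of_int \<lfloor>(x - a) / h\<rfloor>" using x h unfolding j_def by simp
    then have "real j \<le> (x - a) / h" "(x - a) / h < real j + 1" by linarith+
    then have j: "real j * h \<le> x - a" "x - a < real j * h + h"
      using h by (simp_all add: field_simps)
    have "(x - a) / h \<le> (b - a) / h" using x h by (intro divide_right_mono) auto
    then have "j \<le> n" unfolding j_def n_def
      by (intro nat_mono) (meson ceiling_mono floor_le_ceiling order_trans)
    have "dist (f x) (c j) \<le> L * \<bar>x - (a + real j * h)\<bar>"
      unfolding c_def using x j h by (intro lip) auto
    also have "\<dots> < e" using j h \<open>L > 0\<close> by (smt (verit) mult_strict_left_mono)
    finally have "dist (c j) z < 2 * e" using x(2) by (smt (verit) dist_commute dist_triangle)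
    then show "z \<in> (\<Union>j\<le>n. ball (c j) (2 * e))" using \<open>j \<le> n\<close> by auto
  qed
  then have "measure lebesgue (eps_nbhd (f ` {a..b}) e) \<le> measure lebesgue (\<Union>j\<le>n. ball (c j) (2 * e))"
    by (intro measure_mono_fmeasurable eps_nbhd_sets) (auto intro: bounded_set_imp_lmeasurable)
  also have "\<dots> \<le> (\<Sum>j\<le>n. measure lebesgue (ball (c j) (2 * e)))"
    by (rule measure_UNION_le) auto
  also have "\<dots> = real (n + 1) * (4 * pi * e\<^sup>2)"
    using \<open>e > 0\<close> by (simp add: measure_ball_complex power2_eq_square)
  also have "real (n + 1) \<le> L * (b - a) / e + 2"
  proof -
    have "real n = of_int \<lceil>(b - a) / h\<rceil>" unfolding n_def using \<open>a \<le> b\<close> h by simp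
    then have "real n \<le> (b - a) / h + 1" by linarith
    then show ?thesis using h by (simp add: h_def field_simps)
  qed
  then have "real (n + 1) * (4 * pi * e\<^sup>2) \<le> (L * (b - a) / e + 2) * (4 * pi * e\<^sup>2)"
    by (intro mult_right_mono) auto
  finally show ?thesis .
qed

text \<open>If \<open>B\<close> meets every circle of radius at most \<open>D\<close>, the \<open>e\<close>-balls around points of \<open>B\<close> on
  the circles of radii \<open>2e, 4e, \<dots>\<close> are disjoint.\<close>
lemma measure_eps_nbhd_ge_radii:
  fixes B :: "complex set"
  assumes "bounded B" and "D > 0" and hit: "\<And>t. 0 < t \<Longrightarrow> t \<le> D \<Longrightarrow> \<exists>z\<in>B. cmod z = t"
    and "e > 0" "e \<le> D / 4"
  shows "pi * D * e / 4 \<le> measure lebesgue (eps_nbhd B e)"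
proof -
  define N where "N = nat \<lfloor>D / (2 * e)\<rfloor>"
  have N2: "D / (2 * e) \<ge> 2" using assms by (simp add: field_simps)
  then have "real N = of_int \<lfloor>D / (2 * e)\<rfloor>" by (simp add: N_def)
  then have N: "D / (2 * e) - 1 \<le> real N" "real N \<le> D / (2 * e)"
    by linarith+
  have "\<forall>i\<in>{1..N}. \<exists>w. w \<in> B \<and> cmod w = 2 * e * real i"
  proof
    fix i assume i: "i \<in> {1..N}"
    have "2 * e * real i \<le> 2 * e * real N" using i \<open>e > 0\<close> by simp
    also have "\<dots> \<le> D" using N(2) \<open>e > 0\<close> by (simp add: field_simps)
    finally show "\<exists>w. w \<in> B \<and> cmod w = 2 * e * real i" using hit[of "2 * e * real i"] i \<open>e > 0\<close> by auto
  qed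
  then obtain z where z: "\<And>i. i \<in> {1..N} \<Longrightarrow> z i \<in> B \<and> cmod (z i) = 2 * e * real i"
    by metis
  have disj: "pairwise (\<lambda>i j. disjnt (ball (z i) e) (ball (z j) e)) {1..N}"
  proof (rule pairwiseI)
    fix i j assume ij: "i \<in> {1..N}" "j \<in> {1..N}" "i \<noteq> j"
    have "2 * e \<le> 2 * e * \<bar>real i - real j\<bar>" using ij \<open>e > 0\<close> by auto
    also have "\<dots> = \<bar>cmod (z i) - cmod (z j)\<bar>"
      using z[OF ij(1)] z[OF ij(2)] \<open>e > 0\<close> by (simp add: abs_mult flip: right_diff_distrib)
    also have "\<dots> \<le> dist (z i) (z j)" by (simp add: dist_norm norm_triangle_ineq3)
    finally show "disjnt (ball (z i) e) (ball (z j) e)"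
      unfolding disjnt_def by (auto simp: dist_commute) (smt (verit) dist_triangle dist_commute)
  qed
  have "pi * D * e / 4 \<le> real N * (pi * e\<^sup>2)"
  proof -
    have "D / (4 * e) * (pi * e\<^sup>2) \<le> real N * (pi * e\<^sup>2)"
      using N N2 \<open>e > 0\<close> by (intro mult_right_mono) (auto simp: field_simps)
    then show ?thesis using \<open>e > 0\<close> by (simp add: field_simps power2_eq_square)
  qed
  also have "\<dots> = (\<Sum>i\<in>{1..N}. measure lebesgue (ball (z i) e))"
    using \<open>e > 0\<close> by (simp add: measure_ball_complex)
  also have "\<dots> = measure lebesgue (\<Union>i\<in>{1..N}. ball (z i) e)"
    by (rule measure_UNION'[OF _ _ disj, symmetric]) (auto intro!: bounded_set_imp_lmeasurable)
  also have "\<dots> \<le> measure lebesgue (eps_nbhd B e)"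
    using z \<open>bounded B\<close> unfolding eps_nbhd_def[of B]
    by (intro measure_mono_fmeasurable eps_nbhd_lmeasurable[unfolded eps_nbhd_def]) (auto, metis)
  finally show ?thesis .
qed

section \<open>Spirals\<close>

definition spiral :: "(real \<Rightarrow> real) \<Rightarrow> real \<Rightarrow> complex" where
  "spiral r \<phi> = complex_of_real (r \<phi>) * cis \<phi>"

lemma norm_spiral: "r \<phi> \<ge> 0 \<Longrightarrow> norm (spiral r \<phi>) = r \<phi>"
  by (simp add: spiral_def norm_mult)

lemma vector_derivative_bound_imp_lipschitz:
  fixes f :: "real \<Rightarrow> 'a::real_normed_vector"
  assumes "convex S" and "\<And>x. x \<in> S \<Longrightarrow> (f has_vector_derivative f' x) (at x within S)"
    and "\<And>x. x \<in> S \<Longrightarrow> norm (f' x) \<le> B" and "x \<in> S" "y \<in> S"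
  shows "norm (f x - f y) \<le> B * \<bar>x - y\<bar>"
proof -
  have "norm (f x - f y) \<le> B * norm (x - y)"
  proof (rule differentiable_bound[OF assms(1) _ _ assms(4,5)])
    show "(f has_derivative (\<lambda>h. h *\<^sub>R f' x)) (at x within S)" if "x \<in> S" for x
      using assms(2)[OF that] by (simp add: has_vector_derivative_def)
    show "onorm (\<lambda>h. h *\<^sub>R f' x) \<le> B" if "x \<in> S" for x
      by (rule onorm_le) (use assms(3)[OF that] in \<open>auto, metis abs_ge_zero mult.commute mult_right_mono\<close>)
  qed
  then show ?thesis by simp
qed

lemma has_vector_derivative_cis: "(cis has_vector_derivative \<i> * cis x) (at x)"
  using has_derivative_cis[OF has_derivative_ident[of "at x"]] by (simp add: has_vector_derivative_def)

lemma norm_cis_diff_le: "norm (cis x - cis y) \<le> \<bar>x - y\<bar>"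
  using vector_derivative_bound_imp_lipschitz[of UNIV cis "\<lambda>x. \<i> * cis x" 1 x y]
  by (simp add: has_vector_derivative_cis norm_mult)

lemma has_vector_derivative_spiral:
  assumes "(r has_real_derivative r') (at \<phi>)"
  shows "(spiral r has_vector_derivative complex_of_real (r \<phi>) * (\<i> * cis \<phi>) + complex_of_real r' * cis \<phi>) (at \<phi>)"
  unfolding spiral_def[abs_def]
  by (rule has_vector_derivative_mult[OF has_vector_derivative_of_real[OF assms] has_vector_derivative_cis])

lemma spiral_lipschitz:
  assumes der: "\<And>\<phi>. \<phi> \<ge> \<phi>0 \<Longrightarrow> (r has_real_derivative r' \<phi>) (at \<phi> within {\<phi>0..})"
    and "\<And>\<phi>. \<phi> \<ge> \<phi>0 \<Longrightarrow> \<bar>r' \<phi>\<bar> \<le> K" and "\<And>\<phi>. \<phi> \<ge> \<phi>0 \<Longrightarrow> \<bar>r \<phi>\<bar> \<le> R"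
    and "x \<ge> \<phi>0" "y \<ge> \<phi>0"
  shows "dist (spiral r x) (spiral r y) \<le> (K + R) * \<bar>x - y\<bar>"
proof -
  have "norm (r x - r y) \<le> K * norm (x - y)"
    by (rule field_differentiable_bound[of "{\<phi>0..}" r r' K]) (use assms in auto)
  then have "norm (complex_of_real (r x - r y) * cis x) \<le> K * \<bar>x - y\<bar>"
    by (simp add: norm_mult del: of_real_diff)
  moreover have "norm (complex_of_real (r y) * (cis x - cis y)) \<le> R * \<bar>x - y\<bar>"
    using assms(3)[of y] \<open>y \<ge> \<phi>0\<close> norm_cis_diff_le[of x y] by (simp add: norm_mult mult_mono)
  moreover have "spiral r x - spiral r y
      = complex_of_real (r x - r y) * cis x + complex_of_real (r y) * (cis x - cis y)"
    by (simp add: spiral_def algebra_simps)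
  ultimately show ?thesis
    unfolding dist_norm by (smt (verit) norm_triangle_ineq distrib_right)
qed

lemma spiral_meets_circles:
  assumes cont: "continuous_on {\<phi>0..} r" and pos: "\<And>\<phi>. \<phi> \<ge> \<phi>0 \<Longrightarrow> r \<phi> > 0"
    and lim: "(r \<longlongrightarrow> 0) at_top" and "0 < t" "t \<le> r \<phi>0"
  shows "\<exists>z\<in>spiral r ` {\<phi>0..}. cmod z = t"
proof -
  have "eventually (\<lambda>\<phi>. r \<phi> < t) at_top" using lim \<open>0 < t\<close> by (rule order_tendstoD)
  then obtain X where X: "X \<ge> \<phi>0" "r X < t"
    unfolding eventually_at_top_linorder by (meson linorder_le_cases order.trans)
  have "continuous_on {\<phi>0..X} r" by (rule continuous_on_subset[OF cont]) auto
  then obtain \<phi> where "\<phi>0 \<le> \<phi>" "\<phi> \<le> X" "r \<phi> = t"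
    using IVT2'[of r X t \<phi>0] X \<open>t \<le> r \<phi>0\<close> by auto
  then show ?thesis using norm_spiral[of r \<phi>] pos[of \<phi>] by force
qed

text \<open>For \<open>z\<close> in the ball, the spiral crosses the ray through \<open>z\<close> on every turn; two consecutive
  crossings are closer than \<open>2e\<close> and eventually inside \<open>|z|\<close>, so one of them is within \<open>e\<close> of \<open>z\<close>.\<close>
lemma ball_subset_eps_nbhd_spiral:
  assumes "e > 0"
    and gap: "\<And>\<phi>. \<phi> \<ge> T \<Longrightarrow> \<bar>r \<phi> - r (\<phi> + 2 * pi)\<bar> < 2 * e"
    and lim: "(r \<longlongrightarrow> 0) at_top"
    and low: "\<And>\<phi>. \<phi> \<in> {T..T + 2 * pi} \<Longrightarrow> m \<le> r \<phi>"
  shows "ball 0 m \<subseteq> eps_nbhd (spiral r ` {T..}) e"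
proof
  fix z :: complex assume zb: "z \<in> ball 0 m"
  have far: "\<exists>\<phi>\<ge>X. \<forall>\<psi>\<ge>\<phi>. \<bar>r \<psi>\<bar> < d" if "d > 0" for d X
  proof -
    have "eventually (\<lambda>\<phi>. \<bar>r \<phi>\<bar> < d) at_top" using lim that by (auto simp: tendsto_iff dist_real_def)
    then show ?thesis unfolding eventually_at_top_linorder by (metis linorder_le_cases order.trans)
  qed
  show "z \<in> eps_nbhd (spiral r ` {T..}) e"
  proof (cases "z = 0")
    case True
    obtain \<phi> where "\<phi> \<ge> T" "\<bar>r \<phi>\<bar> < e" using far[OF \<open>e > 0\<close>] by blast
    then show ?thesis unfolding eps_nbhd_def using True by (auto simp: spiral_def norm_mult)
  next
    case False
    define k where "k = \<lceil>(T - Arg z) / (2 * pi)\<rceil>"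
    define \<theta> where "\<theta> = Arg z + 2 * pi * of_int k"
    have "(T - Arg z) / (2 * pi) \<le> of_int k" "of_int k < (T - Arg z) / (2 * pi) + 1"
      unfolding k_def by linarith+
    then have \<theta>: "T \<le> \<theta>" "\<theta> < T + 2 * pi" using pi_gt_zero unfolding \<theta>_def by (simp_all add: field_simps)
    have cis_turn: "cis (\<theta> + 2 * pi * real n) = cis (Arg z)" for n :: nat
    proof -
      have "cis (\<theta> + 2 * pi * real n) = cis (Arg z) * cis (2 * pi * (of_int k + real n))"
        unfolding \<theta>_def by (simp add: cis_mult algebra_simps)
      also have "cis (2 * pi * (of_int k + real n)) = 1"
        by (rule cis_multiple_2pi) (auto intro: Ints_add)
      finally show ?thesis by simp
    qed
    define s where "s n = r (\<theta> + 2 * pi * real n)" for n :: nat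
    obtain \<phi> where \<phi>: "\<phi> \<ge> \<theta>" "\<forall>\<psi>\<ge>\<phi>. \<bar>r \<psi>\<bar> < cmod z"
      using far[of "cmod z" \<theta>] False by auto
    obtain n0 :: nat where "real n0 \<ge> (\<phi> - \<theta>) / (2 * pi)" using real_arch_simple by blast
    then have "\<theta> + 2 * pi * real n0 \<ge> \<phi>" using pi_gt_zero by (simp add: field_simps)
    then have ex: "\<exists>n. s n \<le> cmod z" unfolding s_def using \<phi>(2) by (metis abs_less_iff less_imp_le)
    define N where "N = (LEAST n. s n \<le> cmod z)"
    have sN: "s N \<le> cmod z" unfolding N_def by (rule LeastI_ex[OF ex])
    have "s 0 \<ge> m" unfolding s_def using low \<theta> by auto
    then have "N \<noteq> 0" using sN zb by (metis mem_ball_0 not_less order.trans)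
    then obtain M where NM: "N = Suc M" by (cases N) auto
    have sM: "s M > cmod z" using not_less_Least[of M "\<lambda>n. s n \<le> cmod z"] NM N_def by auto
    have "T \<le> \<theta> + 2 * pi * real M" using \<theta> by (simp add: add_increasing2)
    then have "\<bar>s M - s N\<bar> < 2 * e" unfolding s_def NM using gap[of "\<theta> + 2 * pi * real M"]
      by (simp add: algebra_simps)
    then have "\<exists>j. \<bar>cmod z - s j\<bar> < e" using sM sN
      by (cases "s M - cmod z < e") (rule exI[of _ M], arith, rule exI[of _ N], arith)
    then obtain j where j: "\<bar>cmod z - s j\<bar> < e" ..
    have "z = complex_of_real (cmod z) * cis (Arg z)" by (metis rcis_cmod_Arg rcis_def)
    then have "spiral r (\<theta> + 2 * pi * real j) - z = complex_of_real (s j - cmod z) * cis (Arg z)"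
      unfolding spiral_def cis_turn s_def by (simp add: algebra_simps)
    then have "dist (spiral r (\<theta> + 2 * pi * real j)) z < e"
      using j by (simp add: dist_norm norm_mult abs_minus_commute del: of_real_diff)
    moreover have "\<theta> + 2 * pi * real j \<in> {T..}" using \<theta> by (simp add: add_increasing2)
    ultimately show ?thesis unfolding eps_nbhd_def by force
  qed
qed

lemma measure_eps_nbhd_spiral_le:
  assumes bdd: "bounded (spiral r ` {\<phi>0..})" and nonneg: "\<And>\<phi>. \<phi> \<ge> \<phi>0 \<Longrightarrow> r \<phi> \<ge> 0"
    and tail: "\<And>\<phi>. \<phi> \<ge> T \<Longrightarrow> r \<phi> \<le> R" and "e > 0"
  shows "measure lebesgue (eps_nbhd (spiral r ` {\<phi>0..}) e)
    \<le> measure lebesgue (eps_nbhd (spiral r ` {\<phi>0..T}) e) + pi * (max 0 R + e)\<^sup>2"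
proof -
  have sub: "spiral r ` {\<phi>0..} \<subseteq> spiral r ` {\<phi>0..T} \<union> cball 0 R"
    using norm_spiral[of r] nonneg tail by (force simp: not_le intro: less_imp_le)
  have "bounded (spiral r ` {\<phi>0..T} \<union> cball 0 R)"
    using bdd by (auto intro: bounded_subset)
  then have "measure lebesgue (eps_nbhd (spiral r ` {\<phi>0..}) e)
      \<le> measure lebesgue (eps_nbhd (spiral r ` {\<phi>0..T} \<union> cball 0 R) e)"
    by (rule measure_eps_nbhd_mono[OF sub])
  also have "\<dots> \<le> measure lebesgue (eps_nbhd (spiral r ` {\<phi>0..T}) e) + pi * (max 0 R + e)\<^sup>2"
    using measure_eps_nbhd_Un measure_eps_nbhd_cball[OF \<open>e > 0\<close>] by (smt (verit))
  finally show ?thesis .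
qed

lemma box_dim_exponential_spiral:
  assumes "L > 0" and lip: "\<And>x y. x \<ge> \<phi>0 \<Longrightarrow> y \<ge> \<phi>0 \<Longrightarrow> dist (spiral r x) (spiral r y) \<le> L * \<bar>x - y\<bar>"
    and pos: "\<And>\<phi>. \<phi> \<ge> \<phi>0 \<Longrightarrow> r \<phi> > 0" and cont: "continuous_on {\<phi>0..} r"
    and lim: "(r \<longlongrightarrow> 0) at_top"
    and "b > 0" and "c > 0" and decay: "\<And>\<phi>. \<phi> \<ge> T \<Longrightarrow> r \<phi> \<le> c * exp (- b * \<phi>)"
    and bdd: "bounded (spiral r ` {\<phi>0..})"
  shows "lower_box_dim (spiral r ` {\<phi>0..}) = 1 \<and> upper_box_dim (spiral r ` {\<phi>0..}) = 1"
proof (rule box_dim_eqI)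
  define \<mu> where "\<mu> e = measure lebesgue (eps_nbhd (spiral r ` {\<phi>0..}) e)" for e
  define U where "U e = 4 * pi * L * (ln (1 / e) / b - \<phi>0) * e + 8 * pi * e\<^sup>2 + pi * (c + 1)\<^sup>2 * e\<^sup>2" for e
  have bound: "\<mu> e \<le> U e" if "e > 0" and T1: "ln (1 / e) / b \<ge> max T \<phi>0" for e
  proof -
    define T1 where "T1 = ln (1 / e) / b"
    have tail: "r \<phi> \<le> c * e" if "\<phi> \<ge> T1" for \<phi>
    proof -
      have "r \<phi> \<le> c * exp (- b * \<phi>)" using that T1 by (intro decay) (simp add: T1_def)
      also have "\<dots> \<le> c * exp (- b * T1)" using that \<open>b > 0\<close> \<open>c > 0\<close> by simp
      also have "exp (- b * T1) = e" using \<open>e > 0\<close> \<open>b > 0\<close> by (simp add: T1_def ln_div)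
      finally show ?thesis .
    qed
    have "\<mu> e \<le> measure lebesgue (eps_nbhd (spiral r ` {\<phi>0..T1}) e) + pi * (max 0 (c * e) + e)\<^sup>2"
      unfolding \<mu>_def using bdd pos tail \<open>e > 0\<close> by (intro measure_eps_nbhd_spiral_le) (auto intro: less_imp_le)
    also have "\<dots> \<le> (L * (T1 - \<phi>0) / e + 2) * (4 * pi * e\<^sup>2) + pi * (max 0 (c * e) + e)\<^sup>2"
      using T1 \<open>e > 0\<close> \<open>L > 0\<close> lip
      by (intro add_right_mono measure_eps_nbhd_lipschitz_image) (auto simp: T1_def)
    also have "\<dots> = U e" using \<open>e > 0\<close> \<open>c > 0\<close> by (simp add: U_def T1_def power2_eq_square field_simps)
    finally show ?thesis .
  qed
  have "eventually (\<lambda>e. ln (1 / e) / b \<ge> max T \<phi>0) (at_right 0)" using \<open>b > 0\<close> by real_asymp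
  then have "eventually (\<lambda>e. \<mu> e \<le> U e) (at_right 0)"
    using eventually_at_right_less[of 0] by eventually_elim (use bound in auto)
  then show "((\<lambda>e. measure lebesgue (eps_nbhd (spiral r ` {\<phi>0..}) e) / e powr (2 - s)) \<longlongrightarrow> 0) (at_right 0)"
    if "s > 1" for s
    unfolding \<mu>_def by (rule eps_nbhd_ratio_tendsto_zero) (use that \<open>b > 0\<close> in \<open>unfold U_def, real_asymp\<close>)
  show "filterlim (\<lambda>e. measure lebesgue (eps_nbhd (spiral r ` {\<phi>0..}) e) / e powr (2 - s)) at_top (at_right 0)"
    if "s < 1" for s
  proof (rule eps_nbhd_ratio_at_top)
    define D where "D = r \<phi>0"
    have "D > 0" using pos by (simp add: D_def)
    have bound: "pi * D * e / 4 \<le> measure lebesgue (eps_nbhd (spiral r ` {\<phi>0..}) e)"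
      if "0 < e" "e \<le> D / 4" for e
      using bdd \<open>D > 0\<close> spiral_meets_circles[OF cont pos lim] that
      by (intro measure_eps_nbhd_ge_radii) (auto simp: D_def)
    have "eventually (\<lambda>e. e \<le> D / 4) (at_right 0)" using \<open>D > 0\<close> by real_asymp
    then show "eventually (\<lambda>e. pi * D * e / 4 \<le> measure lebesgue (eps_nbhd (spiral r ` {\<phi>0..}) e)) (at_right 0)"
      using eventually_at_right_less[of 0] by eventually_elim (use bound in auto)
    show "filterlim (\<lambda>e. pi * D * e / 4 / e powr (2 - s)) at_top (at_right 0)"
      using \<open>D > 0\<close> that by real_asymp
  qed
qed

lemma lipschitz_powr_reparametrization:
  fixes \<gamma> \<gamma>' :: "real \<Rightarrow> complex"
  assumes \<alpha>: "0 < \<alpha>" "\<alpha> < 1" and "T > 0"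
    and der: "\<And>\<phi>. \<phi> \<ge> T \<Longrightarrow> (\<gamma> has_vector_derivative \<gamma>' \<phi>) (at \<phi>)"
    and bound: "\<And>\<phi>. \<phi> \<ge> T \<Longrightarrow> norm (\<gamma>' \<phi>) \<le> M * \<phi> powr (- \<alpha>)"
    and s: "s \<ge> T powr (1 - \<alpha>)" "s' \<ge> T powr (1 - \<alpha>)"
  shows "dist (\<gamma> (s powr (1 / (1 - \<alpha>)))) (\<gamma> (s' powr (1 / (1 - \<alpha>)))) \<le> M / (1 - \<alpha>) * \<bar>s - s'\<bar>"
proof -
  define q where "q = 1 / (1 - \<alpha>)"
  have q: "q > 0" "q * (1 - \<alpha>) = 1" using \<alpha> by (auto simp: q_def)
  define S where "S = {T powr (1 - \<alpha>)..}"
  have xpos: "x > 0" if "x \<in> S" for x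
    using that \<open>T > 0\<close> by (simp add: S_def) (smt (verit) powr_gt_zero)
  have xq: "x powr q \<ge> T" if "x \<in> S" for x
  proof -
    have "(T powr (1 - \<alpha>)) powr q \<le> x powr q" using that q by (intro powr_mono2) (auto simp: S_def)
    then show ?thesis using q \<open>T > 0\<close> by (simp add: powr_powr mult.commute)
  qed
  have "norm ((\<gamma> \<circ> (\<lambda>x. x powr q)) s - (\<gamma> \<circ> (\<lambda>x. x powr q)) s') \<le> (q * M) * \<bar>s - s'\<bar>"
  proof (rule vector_derivative_bound_imp_lipschitz[where S = S and f' = "\<lambda>x. (q * x powr (q - 1)) *\<^sub>R \<gamma>' (x powr q)"])
    show "convex S" "s \<in> S" "s' \<in> S" using s by (auto simp: S_def)
    fix x assume x: "x \<in> S"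
    have "((\<lambda>x. x powr q) has_vector_derivative q * x powr (q - 1)) (at x)"
      using has_real_derivative_powr[OF xpos[OF x], of q] by (simp add: has_real_derivative_iff_has_vector_derivative)
    from vector_diff_chain_at[OF this der[OF xq[OF x]]]
    show "((\<gamma> \<circ> (\<lambda>x. x powr q)) has_vector_derivative (q * x powr (q - 1)) *\<^sub>R \<gamma>' (x powr q)) (at x within S)"
      by (rule has_vector_derivative_at_within)
    have "norm ((q * x powr (q - 1)) *\<^sub>R \<gamma>' (x powr q)) \<le> q * x powr (q - 1) * (M * (x powr q) powr (- \<alpha>))"
      using bound[OF xq[OF x]] q xpos[OF x] by (simp add: mult_left_mono)
    also have "\<dots> = q * M * (x powr (q - 1) * x powr (- (q * \<alpha>)))" by (simp add: powr_powr)
    also have "x powr (q - 1) * x powr (- (q * \<alpha>)) = x powr (q - 1 - q * \<alpha>)"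
      by (simp add: powr_add[symmetric])
    also have "q - 1 - q * \<alpha> = 0" using q by (simp add: algebra_simps)
    finally show "norm ((q * x powr (q - 1)) *\<^sub>R \<gamma>' (x powr q)) \<le> q * M" using xpos[OF x] by simp
  qed
  then show ?thesis by (simp add: q_def dist_norm)
qed

lemma measure_eps_nbhd_power_spiral_le:
  fixes r r' :: "real \<Rightarrow> real" and \<alpha> :: real
  defines "p \<equiv> 2 * \<alpha> / (1 + \<alpha>)"
  assumes "L > 0" and lip: "\<And>x y. x \<ge> \<phi>0 \<Longrightarrow> y \<ge> \<phi>0 \<Longrightarrow> dist (spiral r x) (spiral r y) \<le> L * \<bar>x - y\<bar>"
    and \<alpha>: "0 < \<alpha>" "\<alpha> < 1" and T: "T \<ge> 1" "\<phi>0 \<le> T" and "c > 0" "C > 0"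
    and pos: "\<And>\<phi>. \<phi> \<ge> \<phi>0 \<Longrightarrow> r \<phi> > 0"
    and upper: "\<And>\<phi>. \<phi> \<ge> T \<Longrightarrow> r \<phi> \<le> c * \<phi> powr (- \<alpha>)"
    and der: "\<And>\<phi>. \<phi> \<ge> T \<Longrightarrow> (r has_real_derivative r' \<phi>) (at \<phi>)"
    and der_bound: "\<And>\<phi>. \<phi> \<ge> T \<Longrightarrow> \<bar>r' \<phi>\<bar> \<le> C * \<phi> powr (- \<alpha> - 1)"
    and bdd: "bounded (spiral r ` {\<phi>0..})"
    and "e > 0" and small: "e powr (- 1 / (1 + \<alpha>)) \<ge> T"
  shows "measure lebesgue (eps_nbhd (spiral r ` {\<phi>0..}) e)
    \<le> 4 * pi * L * (T - \<phi>0) * e + 16 * pi * e\<^sup>2 + 4 * pi * ((c + C) / (1 - \<alpha>)) * e powr p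
      + pi * (2 * c\<^sup>2 * e powr p + 2 * e\<^sup>2)"
proof -
  define M where "M = (c + C) / (1 - \<alpha>)"
  define T1 where "T1 = e powr (- 1 / (1 + \<alpha>))"
  define s0 where "s0 = T powr (1 - \<alpha>)"
  define s1 where "s1 = T1 powr (1 - \<alpha>)"
  define g where "g s = spiral r (s powr (1 / (1 - \<alpha>)))" for s
  have "T \<le> T1" using small by (simp add: T1_def)
  have "M > 0" using \<open>c > 0\<close> \<open>C > 0\<close> \<alpha> by (simp add: M_def)
  have "0 < s0" "s0 \<le> s1" unfolding s0_def s1_def using \<open>T \<le> T1\<close> T \<alpha> by (auto intro!: powr_mono2)
  have g_lip: "dist (g x) (g y) \<le> M * \<bar>x - y\<bar>" if "x \<ge> s0" "y \<ge> s0" for x y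
    unfolding g_def M_def
  proof (rule lipschitz_powr_reparametrization[OF \<alpha> _ has_vector_derivative_spiral[OF der]])
    show "T > 0" "T powr (1 - \<alpha>) \<le> x" "T powr (1 - \<alpha>) \<le> y" using that T by (simp_all add: s0_def)
    fix \<phi> :: real assume \<phi>: "T \<le> \<phi>"
    have "\<phi> powr (- \<alpha> - 1) \<le> \<phi> powr (- \<alpha>)" using \<phi> T by (intro powr_mono) auto
    then have "\<bar>r' \<phi>\<bar> \<le> C * \<phi> powr (- \<alpha>)" using der_bound[OF \<phi>] \<open>C > 0\<close> by (smt (verit) mult_left_mono)
    moreover have "\<bar>r \<phi>\<bar> \<le> c * \<phi> powr (- \<alpha>)" using upper[OF \<phi>] pos[of \<phi>] \<phi> T by simp
    ultimately have "\<bar>r \<phi>\<bar> + \<bar>r' \<phi>\<bar> \<le> (c + C) * \<phi> powr (- \<alpha>)"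
      by (simp add: distrib_right)
    moreover have "norm (complex_of_real (r \<phi>) * (\<i> * cis \<phi>) + complex_of_real (r' \<phi>) * cis \<phi>)
        \<le> \<bar>r \<phi>\<bar> + \<bar>r' \<phi>\<bar>"
      by (rule order.trans[OF norm_triangle_ineq]) (simp add: norm_mult)
    ultimately show "norm (complex_of_real (r \<phi>) * (\<i> * cis \<phi>) + complex_of_real (r' \<phi>) * cis \<phi>)
        \<le> (c + C) * \<phi> powr (- \<alpha>)"
      by linarith
  qed
  have middle: "spiral r ` {T..T1} \<subseteq> g ` {s0..s1}"
  proof
    fix z assume "z \<in> spiral r ` {T..T1}"
    then obtain \<phi> where \<phi>: "T \<le> \<phi>" "\<phi> \<le> T1" "z = spiral r \<phi>" by auto
    then have "\<phi> powr (1 - \<alpha>) \<in> {s0..s1}" unfolding s0_def s1_def using T \<alpha> by (auto intro!: powr_mono2)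
    moreover have "g (\<phi> powr (1 - \<alpha>)) = z" using \<phi> T \<alpha> by (simp add: g_def powr_powr)
    ultimately show "z \<in> g ` {s0..s1}" by blast
  qed
  have "g ` {s0..s1} \<subseteq> spiral r ` {\<phi>0..}"
  proof
    fix z assume "z \<in> g ` {s0..s1}"
    then obtain x where x: "x \<in> {s0..s1}" "z = spiral r (x powr (1 / (1 - \<alpha>)))" by (auto simp: g_def)
    have "T = s0 powr (1 / (1 - \<alpha>))" using T \<alpha> by (simp add: s0_def powr_powr)
    also have "\<dots> \<le> x powr (1 / (1 - \<alpha>))" using x \<open>0 < s0\<close> \<alpha> by (intro powr_mono2) auto
    finally show "z \<in> spiral r ` {\<phi>0..}" using x T by auto
  qed
  then have bdd_parts: "bounded (spiral r ` {\<phi>0..T} \<union> g ` {s0..s1})"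
    using bdd by (auto intro: bounded_subset)
  have "{\<phi>0..T1} = {\<phi>0..T} \<union> {T..T1}" using T \<open>T \<le> T1\<close> by auto
  then have "spiral r ` {\<phi>0..T1} \<subseteq> spiral r ` {\<phi>0..T} \<union> g ` {s0..s1}"
    using middle by (metis image_Un Un_mono order_refl)
  then have cover: "measure lebesgue (eps_nbhd (spiral r ` {\<phi>0..T1}) e)
      \<le> measure lebesgue (eps_nbhd (spiral r ` {\<phi>0..T}) e) + measure lebesgue (eps_nbhd (g ` {s0..s1}) e)"
    by (rule order.trans[OF measure_eps_nbhd_mono[OF _ bdd_parts] measure_eps_nbhd_Un])
  have "measure lebesgue (eps_nbhd (spiral r ` {\<phi>0..T}) e) \<le> (L * (T - \<phi>0) / e + 2) * (4 * pi * e\<^sup>2)"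
    using T \<open>e > 0\<close> \<open>L > 0\<close> lip by (intro measure_eps_nbhd_lipschitz_image) auto
  also have "\<dots> = 4 * pi * L * (T - \<phi>0) * e + 8 * pi * e\<^sup>2"
    using \<open>e > 0\<close> by (simp add: field_simps power2_eq_square)
  finally have initial: "measure lebesgue (eps_nbhd (spiral r ` {\<phi>0..T}) e)
      \<le> 4 * pi * L * (T - \<phi>0) * e + 8 * pi * e\<^sup>2" .
  have "measure lebesgue (eps_nbhd (g ` {s0..s1}) e) \<le> (M * (s1 - s0) / e + 2) * (4 * pi * e\<^sup>2)"
    using \<open>e > 0\<close> \<open>M > 0\<close> \<open>s0 \<le> s1\<close> g_lip by (intro measure_eps_nbhd_lipschitz_image) auto
  also have "\<dots> = 4 * pi * M * ((s1 - s0) * e) + 8 * pi * e\<^sup>2"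
    using \<open>e > 0\<close> by (simp add: field_simps power2_eq_square)
  also have "\<dots> \<le> 4 * pi * M * (s1 * e) + 8 * pi * e\<^sup>2"
    using \<open>e > 0\<close> \<open>0 < s0\<close> \<open>M > 0\<close> by (simp add: mult_left_mono mult_right_mono)
  also have "s1 * e = e powr p"
  proof -
    have "- 1 / (1 + \<alpha>) * (1 - \<alpha>) = (\<alpha> - 1) / (1 + \<alpha>)" using \<alpha> by (simp add: field_simps)
    then have "s1 = e powr ((\<alpha> - 1) / (1 + \<alpha>))" by (simp add: s1_def T1_def powr_powr)
    then have "s1 * e = e powr ((\<alpha> - 1) / (1 + \<alpha>) + 1)" using \<open>e > 0\<close> by (simp add: powr_add)
    also have "(\<alpha> - 1) / (1 + \<alpha>) + 1 = p" using \<alpha> by (simp add: p_def field_simps)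
    finally show ?thesis .
  qed
  finally have near: "measure lebesgue (eps_nbhd (spiral r ` {\<phi>0..T1}) e)
      \<le> 4 * pi * L * (T - \<phi>0) * e + 16 * pi * e\<^sup>2 + 4 * pi * M * e powr p"
    using cover initial by linarith
  have tail: "r \<phi> \<le> c * T1 powr (- \<alpha>)" if "\<phi> \<ge> T1" for \<phi>
  proof -
    have "r \<phi> \<le> c * \<phi> powr (- \<alpha>)" using that \<open>T \<le> T1\<close> by (intro upper) simp
    also have "\<dots> \<le> c * T1 powr (- \<alpha>)" using that \<open>T \<le> T1\<close> T \<open>c > 0\<close> \<alpha> by (intro mult_left_mono powr_mono2') auto
    finally show ?thesis .
  qed
  have "(max 0 (c * T1 powr (- \<alpha>)) + e)\<^sup>2 = (c * T1 powr (- \<alpha>) + e)\<^sup>2"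
    using \<open>c > 0\<close> by simp
  also have "\<dots> \<le> 2 * c\<^sup>2 * (T1 powr (- \<alpha>))\<^sup>2 + 2 * e\<^sup>2"
    using zero_le_power2[of "c * T1 powr (- \<alpha>) - e"] by (simp add: power2_eq_square algebra_simps)
  also have "(T1 powr (- \<alpha>))\<^sup>2 = e powr p"
  proof -
    have "(T1 powr (- \<alpha>))\<^sup>2 = e powr (\<alpha> / (1 + \<alpha>)) * e powr (\<alpha> / (1 + \<alpha>))"
      by (simp add: T1_def powr_powr power2_eq_square)
    also have "\<dots> = e powr p" by (simp add: p_def powr_add[symmetric])
    finally show ?thesis .
  qed
  finally have far: "pi * (max 0 (c * T1 powr (- \<alpha>)) + e)\<^sup>2 \<le> pi * (2 * c\<^sup>2 * e powr p + 2 * e\<^sup>2)"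
    by simp
  have "measure lebesgue (eps_nbhd (spiral r ` {\<phi>0..}) e)
      \<le> measure lebesgue (eps_nbhd (spiral r ` {\<phi>0..T1}) e) + pi * (max 0 (c * T1 powr (- \<alpha>)) + e)\<^sup>2"
    using pos by (intro measure_eps_nbhd_spiral_le[OF bdd _ tail \<open>e > 0\<close>]) (simp add: less_imp_le)
  with near far show ?thesis unfolding M_def by linarith
qed

lemma measure_eps_nbhd_power_spiral_ge:
  fixes r r' :: "real \<Rightarrow> real" and \<alpha> C :: real
  defines "p \<equiv> 2 * \<alpha> / (1 + \<alpha>)" and "K \<equiv> (2 * pi * C) powr (1 / (1 + \<alpha>))"
  assumes \<alpha>: "0 < \<alpha>" "\<alpha> < 1" and "\<phi>0 \<le> T" and "c > 0" "C > 0"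
    and lower: "\<And>\<phi>. \<phi> \<ge> T \<Longrightarrow> c * \<phi> powr (- \<alpha>) \<le> r \<phi>"
    and lim: "(r \<longlongrightarrow> 0) at_top"
    and der: "\<And>\<phi>. \<phi> \<ge> T \<Longrightarrow> (r has_real_derivative r' \<phi>) (at \<phi>)"
    and der_bound: "\<And>\<phi>. \<phi> \<ge> T \<Longrightarrow> \<bar>r' \<phi>\<bar> \<le> C * \<phi> powr (- \<alpha> - 1)"
    and bdd: "bounded (spiral r ` {\<phi>0..})"
    and "e > 0" and small: "K * e powr (- 1 / (1 + \<alpha>)) \<ge> max T (2 * pi)"
  shows "pi * c\<^sup>2 * (2 * K) powr (- 2 * \<alpha>) * e powr p \<le> measure lebesgue (eps_nbhd (spiral r ` {\<phi>0..}) e)"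
proof -
  define \<beta> where "\<beta> = 1 / (1 + \<alpha>)"
  have \<beta>: "\<beta> * (1 + \<alpha>) = 1" "2 * \<alpha> * \<beta> = p" using \<alpha> by (auto simp: \<beta>_def p_def)
  have "K > 0" using \<open>C > 0\<close> by (simp add: K_def)
  define T1 where "T1 = K * e powr (- \<beta>)"
  have T1: "T1 \<ge> T" "T1 \<ge> 2 * pi" using small by (auto simp: T1_def \<beta>_def)
  have "T1 > 0" using T1(2) pi_gt_zero by linarith
  have T1_pow: "C * T1 powr (- \<alpha> - 1) = e / (2 * pi)"
  proof -
    have "T1 powr (- \<alpha> - 1) = K powr (- \<alpha> - 1) * (e powr (- \<beta>)) powr (- \<alpha> - 1)"
      using \<open>K > 0\<close> \<open>e > 0\<close> by (simp add: T1_def powr_mult)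
    also have "K powr (- \<alpha> - 1) = (2 * pi * C) powr (- 1)"
    proof -
      have "\<beta> * (- \<alpha> - 1) = - 1" using \<beta>(1) by (simp add: algebra_simps)
      then show ?thesis unfolding K_def \<beta>_def[symmetric] by (simp only: powr_powr)
    qed
    also have "(e powr (- \<beta>)) powr (- \<alpha> - 1) = e powr 1"
      using \<beta>(1) by (simp add: powr_powr algebra_simps)
    finally show ?thesis using \<open>C > 0\<close> \<open>e > 0\<close> by (simp add: powr_minus_divide powr_one field_simps)
  qed
  have gap: "\<bar>r \<phi> - r (\<phi> + 2 * pi)\<bar> < 2 * e" if \<phi>: "\<phi> \<ge> T1" for \<phi>
  proof -
    obtain z where z: "\<phi> < z" "z < \<phi> + 2 * pi" "r (\<phi> + 2 * pi) - r \<phi> = (\<phi> + 2 * pi - \<phi>) * r' z"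
      using MVT2[of \<phi> "\<phi> + 2 * pi" r r'] der \<phi> T1 by (smt (verit) pi_gt_zero)
    have "\<bar>r' z\<bar> \<le> C * z powr (- \<alpha> - 1)" using z \<phi> T1 by (intro der_bound) auto
    also have "\<dots> \<le> C * T1 powr (- \<alpha> - 1)"
      using z \<phi> \<open>T1 > 0\<close> \<open>C > 0\<close> \<alpha> by (intro mult_left_mono powr_mono2') auto
    also have "\<dots> = e / (2 * pi)" by (rule T1_pow)
    finally have "\<bar>r (\<phi> + 2 * pi) - r \<phi>\<bar> \<le> 2 * pi * (e / (2 * pi))"
      using z(3) pi_gt_zero by (simp add: abs_mult field_simps)
    then show ?thesis using \<open>e > 0\<close> by (simp add: abs_minus_commute)
  qed
  define m where "m = c * (2 * T1) powr (- \<alpha>)"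
  have m_le: "m \<le> r \<phi>" if "\<phi> \<in> {T1..T1 + 2 * pi}" for \<phi>
  proof -
    have "m \<le> c * \<phi> powr (- \<alpha>)" unfolding m_def using that T1 \<open>T1 > 0\<close> \<open>c > 0\<close> \<alpha>
      by (intro mult_left_mono powr_mono2') auto
    also have "\<dots> \<le> r \<phi>" using lower[of \<phi>] that T1 by auto
    finally show ?thesis .
  qed
  have "ball 0 m \<subseteq> eps_nbhd (spiral r ` {T1..}) e"
    by (rule ball_subset_eps_nbhd_spiral[OF \<open>e > 0\<close> gap lim m_le])
  also have "\<dots> \<subseteq> eps_nbhd (spiral r ` {\<phi>0..}) e"
    using T1 \<open>\<phi>0 \<le> T\<close> by (intro eps_nbhd_mono) auto
  finally have sub: "ball 0 m \<subseteq> eps_nbhd (spiral r ` {\<phi>0..}) e" .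
  have "m > 0" using \<open>c > 0\<close> \<open>T1 > 0\<close> by (simp add: m_def)
  then have "pi * m\<^sup>2 = measure lebesgue (ball (0::complex) m)" by (simp add: measure_ball_complex)
  also have "\<dots> \<le> measure lebesgue (eps_nbhd (spiral r ` {\<phi>0..}) e)"
    by (rule measure_mono_fmeasurable[OF sub _ eps_nbhd_lmeasurable[OF bdd]]) simp
  finally have "pi * m\<^sup>2 \<le> measure lebesgue (eps_nbhd (spiral r ` {\<phi>0..}) e)" .
  moreover have "m\<^sup>2 = c\<^sup>2 * (2 * K) powr (- 2 * \<alpha>) * e powr p"
  proof -
    have "m\<^sup>2 = c\<^sup>2 * ((2 * T1) powr (- \<alpha>))\<^sup>2" by (simp add: m_def power_mult_distrib)
    also have "((2 * T1) powr (- \<alpha>))\<^sup>2 = (2 * T1) powr (- 2 * \<alpha>)"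
      using \<open>T1 > 0\<close> by (simp add: power2_eq_square powr_add[symmetric])
    also have "(2 * T1) powr (- 2 * \<alpha>) = (2 * K) powr (- 2 * \<alpha>) * (e powr (- \<beta>)) powr (- 2 * \<alpha>)"
      using \<open>K > 0\<close> \<open>e > 0\<close> by (simp add: T1_def powr_mult mult.assoc)
    also have "(e powr (- \<beta>)) powr (- 2 * \<alpha>) = e powr p" using \<beta>(2) by (simp add: powr_powr algebra_simps)
    finally show ?thesis by simp
  qed
  ultimately show ?thesis by (simp add: mult.assoc)
qed

lemma box_dim_power_spiral:
  fixes r r' :: "real \<Rightarrow> real"
  assumes "L > 0" and lip: "\<And>x y. x \<ge> \<phi>0 \<Longrightarrow> y \<ge> \<phi>0 \<Longrightarrow> dist (spiral r x) (spiral r y) \<le> L * \<bar>x - y\<bar>"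
    and \<alpha>: "0 < \<alpha>" "\<alpha> < 1" and T: "T \<ge> 1" "\<phi>0 \<le> T" and c: "c1 > 0" "c2 > 0" and "C > 0"
    and pos: "\<And>\<phi>. \<phi> \<ge> \<phi>0 \<Longrightarrow> r \<phi> > 0"
    and bounds: "\<And>\<phi>. \<phi> \<ge> T \<Longrightarrow> c1 * \<phi> powr (- \<alpha>) \<le> r \<phi> \<and> r \<phi> \<le> c2 * \<phi> powr (- \<alpha>)"
    and der: "\<And>\<phi>. \<phi> \<ge> T \<Longrightarrow> (r has_real_derivative r' \<phi>) (at \<phi>)"
    and der_bound: "\<And>\<phi>. \<phi> \<ge> T \<Longrightarrow> \<bar>r' \<phi>\<bar> \<le> C * \<phi> powr (- \<alpha> - 1)"
    and bdd: "bounded (spiral r ` {\<phi>0..})"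
  shows "lower_box_dim (spiral r ` {\<phi>0..}) = 2 / (1 + \<alpha>) \<and> upper_box_dim (spiral r ` {\<phi>0..}) = 2 / (1 + \<alpha>)"
proof (rule box_dim_eqI)
  define p where "p = 2 * \<alpha> / (1 + \<alpha>)"
  have p: "0 < p" "p < 1" "2 - p = 2 / (1 + \<alpha>)" using \<alpha> by (auto simp: p_def field_simps)
  show "((\<lambda>e. measure lebesgue (eps_nbhd (spiral r ` {\<phi>0..}) e) / e powr (2 - s)) \<longlongrightarrow> 0) (at_right 0)"
    if "s > 2 / (1 + \<alpha>)" for s
  proof (rule eps_nbhd_ratio_tendsto_zero)
    have "eventually (\<lambda>e. e powr (- 1 / (1 + \<alpha>)) \<ge> T) (at_right 0)" using \<alpha> by real_asymp
    then show "eventually (\<lambda>e. measure lebesgue (eps_nbhd (spiral r ` {\<phi>0..}) e)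
        \<le> 4 * pi * L * (T - \<phi>0) * e + 16 * pi * e\<^sup>2 + 4 * pi * ((c2 + C) / (1 - \<alpha>)) * e powr p
          + pi * (2 * c2\<^sup>2 * e powr p + 2 * e\<^sup>2)) (at_right 0)"
      using eventually_at_right_less[of 0] unfolding p_def
      by eventually_elim
        (use measure_eps_nbhd_power_spiral_le[OF \<open>L > 0\<close> lip \<alpha> T c(2) \<open>C > 0\<close> pos _ der der_bound bdd]
          bounds in auto)
    show "((\<lambda>e. (4 * pi * L * (T - \<phi>0) * e + 16 * pi * e\<^sup>2 + 4 * pi * ((c2 + C) / (1 - \<alpha>)) * e powr p
        + pi * (2 * c2\<^sup>2 * e powr p + 2 * e\<^sup>2)) / e powr (2 - s)) \<longlongrightarrow> 0) (at_right 0)"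
    proof -
      have "s > 2 - p" using that p by simp
      then show ?thesis using p(1,2) by real_asymp
    qed
  qed
  show "filterlim (\<lambda>e. measure lebesgue (eps_nbhd (spiral r ` {\<phi>0..}) e) / e powr (2 - s)) at_top (at_right 0)"
    if "s < 2 / (1 + \<alpha>)" for s
  proof (rule eps_nbhd_ratio_at_top)
    define K where "K = (2 * pi * C) powr (1 / (1 + \<alpha>))"
    have "K > 0" using \<open>C > 0\<close> by (simp add: K_def)
    have lim: "(r \<longlongrightarrow> 0) at_top"
    proof (rule tendsto_sandwich[of "\<lambda>_. 0" _ _ "\<lambda>\<phi>. c2 * \<phi> powr (- \<alpha>)"])
      show "eventually (\<lambda>\<phi>. 0 \<le> r \<phi>) at_top"
        using eventually_ge_at_top[of \<phi>0] by eventually_elim (use pos in \<open>auto intro: less_imp_le\<close>)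
      show "eventually (\<lambda>\<phi>. r \<phi> \<le> c2 * \<phi> powr (- \<alpha>)) at_top"
        using eventually_ge_at_top[of T] by eventually_elim (use bounds in auto)
      show "((\<lambda>\<phi>. c2 * \<phi> powr (- \<alpha>)) \<longlongrightarrow> 0) at_top" using \<alpha> by real_asymp
    qed simp
    have "eventually (\<lambda>e. K * e powr (- 1 / (1 + \<alpha>)) \<ge> max T (2 * pi)) (at_right 0)"
      using \<alpha> \<open>K > 0\<close> by real_asymp
    then show "eventually (\<lambda>e. pi * c1\<^sup>2 * (2 * K) powr (- 2 * \<alpha>) * e powr p
        \<le> measure lebesgue (eps_nbhd (spiral r ` {\<phi>0..}) e)) (at_right 0)"
      using eventually_at_right_less[of 0] unfolding p_def K_def
      by eventually_elim
        (use measure_eps_nbhd_power_spiral_ge[OF \<alpha> T(2) c(1) \<open>C > 0\<close> _ lim der der_bound bdd] bounds in auto)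
    show "filterlim (\<lambda>e. pi * c1\<^sup>2 * (2 * K) powr (- 2 * \<alpha>) * e powr p / e powr (2 - s)) at_top (at_right 0)"
    proof -
      have "s < 2 - p" using that p by simp
      then show ?thesis using p(1,2) c \<open>K > 0\<close> by real_asymp
    qed
  qed
qed

section \<open>Comparison arguments for the normal form\<close>

lemma DERIV_nonneg_imp_le:
  fixes f f' :: "real \<Rightarrow> real"
  assumes "a \<le> b" "continuous_on {a..b} f"
    and "\<And>x. a < x \<Longrightarrow> x < b \<Longrightarrow> (f has_real_derivative f' x) (at x)"
    and "\<And>x. a < x \<Longrightarrow> x < b \<Longrightarrow> f' x \<ge> 0"
  shows "f a \<le> f b"
  by (rule DERIV_nonneg_imp_increasing_open[OF assms(1) _ assms(2)]) (use assms(3,4) in blast)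

text \<open>Otherwise take the last time \<open>s\<close> with \<open>f s \<le> M\<close> and the first later time \<open>u\<close> with
  \<open>f u \<ge> L > M\<close>; in between \<open>f\<close> is trapped in \<open>(M, L)\<close>, so it cannot increase from \<open>s\<close> to \<open>u\<close>.\<close>
lemma stays_below_barrier:
  fixes f f' :: "real \<Rightarrow> real"
  assumes "a \<le> x" and cont: "continuous_on {a..x} f"
    and der: "\<And>y. a < y \<Longrightarrow> y < x \<Longrightarrow> (f has_real_derivative f' y) (at y)"
    and "f a \<le> M" and "M < M'"
    and sign: "\<And>y. a < y \<Longrightarrow> y < x \<Longrightarrow> M < f y \<Longrightarrow> f y < M' \<Longrightarrow> f' y \<le> 0"
  shows "f x \<le> M"
proof (rule ccontr)
  assume "\<not> f x \<le> M"
  define L where "L = min (f x) ((M + M') / 2)"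
  have L: "M < L" "L \<le> f x" "L < M'" using \<open>\<not> f x \<le> M\<close> \<open>M < M'\<close> by (auto simp: L_def min_def)
  define S where "S = {a..x} \<inter> f -` {..M}"
  have "closed S" unfolding S_def by (rule continuous_closed_preimage[OF cont]) auto
  moreover have "a \<in> S" using \<open>a \<le> x\<close> \<open>f a \<le> M\<close> by (auto simp: S_def)
  ultimately have "Sup S \<in> S" by (intro closed_contains_Sup) (auto simp: S_def bdd_above_def)
  define s where "s = Sup S"
  have s: "a \<le> s" "s \<le> x" "f s \<le> M" using \<open>Sup S \<in> S\<close> by (auto simp: S_def s_def)
  have above_S: "y \<notin> S" if "s < y" for y
    using that cSup_upper[of y S] unfolding s_def by (force simp: S_def bdd_above_def)
  define U where "U = {s..x} \<inter> f -` {L..}"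
  have "closed U" unfolding U_def
    by (rule continuous_closed_preimage[OF continuous_on_subset[OF cont]]) (use s in auto)
  moreover have "x \<in> U" using s L by (auto simp: U_def)
  ultimately have "Inf U \<in> U" by (intro closed_contains_Inf) (auto simp: U_def bdd_below_def)
  define u where "u = Inf U"
  have u: "s \<le> u" "u \<le> x" "L \<le> f u" using \<open>Inf U \<in> U\<close> by (auto simp: U_def u_def)
  have below_U: "y \<notin> U" if "y < u" for y
    using that cInf_lower[of y U] unfolding u_def by (force simp: U_def bdd_below_def)
  have "f u \<le> f s"
  proof (rule DERIV_nonpos_imp_decreasing_open[OF u(1)])
    show "continuous_on {s..u} f" by (rule continuous_on_subset[OF cont]) (use s u in auto)
    fix y assume y: "s < y" "y < u"
    have "M < f y" using above_S[OF y(1)] y s u by (auto simp: S_def)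
    moreover have "f y < L" using below_U[OF y(2)] y s u by (auto simp: U_def)
    ultimately show "\<exists>d. (f has_real_derivative d) (at y) \<and> d \<le> 0"
      using der sign y s u L by (intro exI[of _ "f' y"]) auto
  qed
  then show False using u s L by linarith
qed

lemma stays_above_barrier:
  fixes f f' :: "real \<Rightarrow> real"
  assumes "a \<le> x" and "continuous_on {a..x} f"
    and "\<And>y. a < y \<Longrightarrow> y < x \<Longrightarrow> (f has_real_derivative f' y) (at y)"
    and "f a \<ge> M" and "M' < M"
    and "\<And>y. a < y \<Longrightarrow> y < x \<Longrightarrow> M' < f y \<Longrightarrow> f y < M \<Longrightarrow> f' y \<ge> 0"
  shows "f x \<ge> M"
  using stays_below_barrier[of a x "\<lambda>y. - f y" "\<lambda>y. - f' y" "- M" "- M'"] assms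
  by (force intro!: continuous_intros derivative_eq_intros)

lemma deviation_from_linear_growth:
  fixes f f' :: "real \<Rightarrow> real"
  assumes "b > 0" "D \<ge> 0" "x0 \<le> x" and cont: "continuous_on {x0..x} f"
    and der: "\<And>t. x0 < t \<Longrightarrow> t < x \<Longrightarrow> (f has_real_derivative f' t) (at t)"
    and close: "\<And>t. x0 < t \<Longrightarrow> t < x \<Longrightarrow> \<bar>f' t - b\<bar> \<le> D * exp (- b * (t - x0))"
  shows "\<bar>f x - f x0 - b * (x - x0)\<bar> \<le> D / b"
proof -
  define E where "E t = D / b * exp (- b * (t - x0))" for t
  have E_der: "(E has_real_derivative - D * exp (- b * (t - x0))) (at t)" for t
    unfolding E_def using \<open>b > 0\<close> by (auto intro!: derivative_eq_intros)
  have E_cont: "continuous_on {x0..x} E" unfolding E_def by (intro continuous_intros)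
  have "(\<lambda>t. b * t - f t - E t) x0 \<le> (\<lambda>t. b * t - f t - E t) x"
  proof (rule DERIV_nonneg_imp_le[OF \<open>x0 \<le> x\<close>])
    show "continuous_on {x0..x} (\<lambda>t. b * t - f t - E t)" using cont E_cont by (intro continuous_intros)
    show "((\<lambda>t. b * t - f t - E t) has_real_derivative b - f' t + D * exp (- b * (t - x0))) (at t)"
      if "x0 < t" "t < x" for t
      using der[OF that] E_der[of t] by (auto intro!: derivative_eq_intros)
    show "0 \<le> b - f' t + D * exp (- b * (t - x0))" if "x0 < t" "t < x" for t
      using close[OF that] by (simp add: abs_le_iff)
  qed
  moreover have "(\<lambda>t. f t - b * t - E t) x0 \<le> (\<lambda>t. f t - b * t - E t) x"
  proof (rule DERIV_nonneg_imp_le[OF \<open>x0 \<le> x\<close>])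
    show "continuous_on {x0..x} (\<lambda>t. f t - b * t - E t)" using cont E_cont by (intro continuous_intros)
    show "((\<lambda>t. f t - b * t - E t) has_real_derivative f' t - b + D * exp (- b * (t - x0))) (at t)"
      if "x0 < t" "t < x" for t
      using der[OF that] E_der[of t] by (auto intro!: derivative_eq_intros)
    show "0 \<le> f' t - b + D * exp (- b * (t - x0))" if "x0 < t" "t < x" for t
      using close[OF that] by (simp add: abs_le_iff)
  qed
  moreover have "E x0 = D / b" "E x \<ge> 0" using \<open>b > 0\<close> \<open>D \<ge> 0\<close> by (simp_all add: E_def)
  ultimately show ?thesis by (simp add: abs_le_iff algebra_simps)
qed

text \<open>With \<open>r = 1/\<rho>\<close> the system reads \<open>r' = r \<cdot> normal_form_poly a l r\<close>, the Hopf--Takens normal form.\<close>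
definition normal_form_poly :: "(nat \<Rightarrow> real) \<Rightarrow> nat \<Rightarrow> real \<Rightarrow> real" where
  "normal_form_poly a l x = (\<Sum>j\<le>l. a j * x ^ (2 * j))"

definition reduced_normal_form_poly :: "(nat \<Rightarrow> real) \<Rightarrow> nat \<Rightarrow> nat \<Rightarrow> real \<Rightarrow> real" where
  "reduced_normal_form_poly a k l x = (\<Sum>j\<in>{k..l}. a j * x ^ (2 * (j - k)))"

lemma normal_form_poly_eq_reduced:
  assumes "k \<le> l" "\<forall>j<k. a j = 0"
  shows "normal_form_poly a l x = x ^ (2 * k) * reduced_normal_form_poly a k l x"
proof -
  have split: "{..l} = {..<k} \<union> {k..l}" using assms by auto
  have "normal_form_poly a l x = (\<Sum>j<k. a j * x ^ (2 * j)) + (\<Sum>j\<in>{k..l}. a j * x ^ (2 * j))"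
    unfolding normal_form_poly_def split by (rule sum.union_disjoint) auto
  also have "(\<Sum>j<k. a j * x ^ (2 * j)) = 0" using assms by simp
  also have "(\<Sum>j\<in>{k..l}. a j * x ^ (2 * j)) = (\<Sum>j\<in>{k..l}. x ^ (2 * k) * (a j * x ^ (2 * (j - k))))"
  proof (rule sum.cong)
    fix j assume "j \<in> {k..l}"
    then have "2 * j = 2 * k + 2 * (j - k)" by auto
    then show "a j * x ^ (2 * j) = x ^ (2 * k) * (a j * x ^ (2 * (j - k)))" by (simp add: power_add)
  qed simp
  finally show ?thesis unfolding reduced_normal_form_poly_def by (simp add: sum_distrib_left)
qed

lemma abs_normal_form_poly_le:
  assumes "\<bar>x\<bar> \<le> R"
  shows "\<bar>normal_form_poly a l x\<bar> \<le> (\<Sum>j\<le>l. \<bar>a j\<bar> * (max 1 R) ^ (2 * j))"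
  unfolding normal_form_poly_def
proof (rule order.trans[OF sum_abs sum_mono])
  fix j assume "j \<in> {..l}"
  have "\<bar>x\<bar> ^ (2 * j) \<le> (max 1 R) ^ (2 * j)" using assms by (intro power_mono) auto
  then show "\<bar>a j * x ^ (2 * j)\<bar> \<le> \<bar>a j\<bar> * max 1 R ^ (2 * j)"
    by (simp add: abs_mult power_abs mult_left_mono)
qed

lemma reduced_normal_form_poly_approx:
  assumes "k \<le> l" "\<bar>x\<bar> \<le> 1"
  shows "\<bar>reduced_normal_form_poly a k l x - a k\<bar> \<le> (\<Sum>j\<in>{k<..l}. \<bar>a j\<bar>) * x\<^sup>2"
proof -
  have "{k..l} = insert k {k<..l}" using assms by auto
  then have "reduced_normal_form_poly a k l x - a k = (\<Sum>j\<in>{k<..l}. a j * x ^ (2 * (j - k)))"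
    unfolding reduced_normal_form_poly_def by simp
  also have "\<bar>\<dots>\<bar> \<le> (\<Sum>j\<in>{k<..l}. \<bar>a j\<bar> * x\<^sup>2)"
  proof (rule order.trans[OF sum_abs sum_mono])
    fix j assume "j \<in> {k<..l}"
    then obtain n where n: "j - k = Suc n" by (cases "j - k") auto
    have "x\<^sup>2 \<le> 1" using assms by (simp add: abs_square_le_1)
    then have "(x\<^sup>2) ^ n \<le> 1" by (rule power_le_one[OF zero_le_power2])
    then have "x\<^sup>2 * (x\<^sup>2) ^ n \<le> x\<^sup>2" by (simp add: mult_left_le)
    moreover have "x ^ (2 * (j - k)) = x\<^sup>2 * (x\<^sup>2) ^ n" unfolding n power_mult by simp
    ultimately show "\<bar>a j * x ^ (2 * (j - k))\<bar> \<le> \<bar>a j\<bar> * x\<^sup>2"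
      by (simp add: abs_mult mult_left_mono)
  qed
  finally show ?thesis by (simp add: sum_distrib_right)
qed

lemma reduced_normal_form_poly_near_zero:
  assumes "k \<le> l" "a k \<noteq> 0"
  obtains m K where "0 < m" "0 \<le> K"
    and "\<And>x. 0 \<le> x \<Longrightarrow> x \<le> m \<Longrightarrow> \<bar>reduced_normal_form_poly a k l x - a k\<bar> \<le> K * x\<^sup>2"
    and "\<And>x. 0 \<le> x \<Longrightarrow> x \<le> m \<Longrightarrow> K * x\<^sup>2 \<le> \<bar>a k\<bar> / 2"
proof -
  define K where "K = (\<Sum>j\<in>{k<..l}. \<bar>a j\<bar>)"
  have "K \<ge> 0" unfolding K_def by (simp add: sum_nonneg)
  define m where "m = min 1 (sqrt (\<bar>a k\<bar> / (2 * (K + 1))))"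
  have "m > 0" using assms \<open>K \<ge> 0\<close> by (simp add: m_def)
  moreover have "K * x\<^sup>2 \<le> \<bar>a k\<bar> / 2" if "0 \<le> x" "x \<le> m" for x
  proof -
    have "x\<^sup>2 \<le> (sqrt (\<bar>a k\<bar> / (2 * (K + 1))))\<^sup>2" using that by (intro power_mono) (auto simp: m_def)
    also have "\<dots> = \<bar>a k\<bar> / (2 * (K + 1))" using \<open>K \<ge> 0\<close> by simp
    finally have "(K + 1) * x\<^sup>2 \<le> \<bar>a k\<bar> / 2" using \<open>K \<ge> 0\<close> by (simp add: field_simps)
    moreover have "K * x\<^sup>2 \<le> (K + 1) * x\<^sup>2" by (simp add: mult_right_mono)
    ultimately show ?thesis by linarith
  qed
  moreover have "\<bar>reduced_normal_form_poly a k l x - a k\<bar> \<le> K * x\<^sup>2" if "0 \<le> x" "x \<le> m" for x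
    unfolding K_def using that by (intro reduced_normal_form_poly_approx \<open>k \<le> l\<close>) (simp add: m_def)
  ultimately show thesis using that \<open>K \<ge> 0\<close> by blast
qed

text \<open>If \<open>a\<^sub>k > 0\<close>, the solution is pushed up whenever it is below \<open>m\<close>, so it never gets small;
  if \<open>a\<^sub>k < 0\<close>, it cannot climb back over a level below \<open>m\<close> once it has reached it.\<close>
lemma escaping_solution_leading_coeff:
  fixes r :: "real \<Rightarrow> real"
  assumes "k \<le> l" and "\<forall>j<k. a j = 0" and "a k \<noteq> 0" and "m > 0"
    and near: "\<And>x. 0 \<le> x \<Longrightarrow> x \<le> m \<Longrightarrow> \<bar>reduced_normal_form_poly a k l x - a k\<bar> \<le> \<bar>a k\<bar> / 2"
    and pos: "\<And>\<phi>. \<phi> \<ge> \<phi>0 \<Longrightarrow> r \<phi> > 0"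
    and der: "\<And>\<phi>. \<phi> \<ge> \<phi>0 \<Longrightarrow>
      (r has_real_derivative r \<phi> * normal_form_poly a l (r \<phi>)) (at \<phi> within {\<phi>0..})"
    and small: "\<And>\<delta>. \<delta> > 0 \<Longrightarrow> \<exists>\<phi>\<ge>\<phi>0. r \<phi> < \<delta>"
  shows "a k < 0 \<and> (\<exists>\<phi>1\<ge>\<phi>0. \<forall>\<phi>\<ge>\<phi>1. r \<phi> \<le> m)"
proof -
  define W where "W = reduced_normal_form_poly a k l"
  have der_at: "(r has_real_derivative r \<phi> ^ (2 * k + 1) * W (r \<phi>)) (at \<phi>)" if "\<phi> > \<phi>0" for \<phi>
  proof -
    have "(r has_real_derivative r \<phi> * normal_form_poly a l (r \<phi>)) (at \<phi>)"
      using der[of \<phi>] that at_within_interior[of \<phi> "{\<phi>0..}"] by auto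
    then show ?thesis using normal_form_poly_eq_reduced[OF \<open>k \<le> l\<close> \<open>\<forall>j<k. a j = 0\<close>]
      by (simp add: W_def algebra_simps)
  qed
  have cont: "continuous_on {x..y} r" if "x \<ge> \<phi>0" for x y
    by (rule continuous_on_subset[OF DERIV_continuous_on[OF der]]) (use that in auto)
  have "a k < 0"
  proof (rule ccontr)
    assume "\<not> a k < 0"
    then have "a k > 0" using \<open>a k \<noteq> 0\<close> by simp
    define \<mu> where "\<mu> = min (r \<phi>0) m"
    have "\<mu> > 0" using pos[of \<phi>0] \<open>m > 0\<close> by (simp add: \<mu>_def)
    have "r x \<ge> \<mu>" if "x \<ge> \<phi>0" for x
    proof (rule stays_above_barrier[of \<phi>0 x r "\<lambda>\<phi>. r \<phi> ^ (2 * k + 1) * W (r \<phi>)" \<mu> 0])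
      fix y assume y: "\<phi>0 < y" "y < x" "0 < r y" "r y < \<mu>"
      have "\<bar>W (r y) - a k\<bar> \<le> a k / 2" using near[of "r y"] y \<open>a k > 0\<close> by (auto simp: W_def \<mu>_def)
      then have "W (r y) \<ge> a k / 2" by arith
      then show "0 \<le> r y ^ (2 * k + 1) * W (r y)" using y \<open>a k > 0\<close> by simp
    qed (use that cont der_at \<open>\<mu> > 0\<close> in \<open>auto simp: \<mu>_def\<close>)
    then show False using small[OF \<open>\<mu> > 0\<close>] by (meson not_le)
  qed
  moreover obtain \<phi>1 where \<phi>1: "\<phi>1 \<ge> \<phi>0" "r \<phi>1 < m" using small[OF \<open>m > 0\<close>] by blast
  have "r x \<le> r \<phi>1" if "x \<ge> \<phi>1" for x
  proof (rule stays_below_barrier[of \<phi>1 x r "\<lambda>\<phi>. r \<phi> ^ (2 * k + 1) * W (r \<phi>)" "r \<phi>1" m])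
    fix y assume y: "\<phi>1 < y" "y < x" "r \<phi>1 < r y" "r y < m"
    have "0 < r y" using pos y \<phi>1 by simp
    moreover have "W (r y) \<le> a k / 2" using near[of "r y"] y \<open>0 < r y\<close> \<open>a k < 0\<close> by (auto simp: W_def)
    ultimately show "r y ^ (2 * k + 1) * W (r y) \<le> 0" using \<open>a k < 0\<close> by (simp add: mult_nonneg_nonpos)
  qed (use that cont der_at \<phi>1 in auto)
  then have "\<forall>\<phi>\<ge>\<phi>1. r \<phi> \<le> m" using \<phi>1 by force
  ultimately show ?thesis using \<phi>1 by auto
qed

lemma inverse_power_solution_bounds:
  fixes r w :: "real \<Rightarrow> real" and k :: nat
  assumes "k \<ge> 1" and cont: "continuous_on {\<phi>1..} r" and pos: "\<And>\<phi>. \<phi> \<ge> \<phi>1 \<Longrightarrow> r \<phi> > 0"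
    and der: "\<And>\<phi>. \<phi> > \<phi>1 \<Longrightarrow> (r has_real_derivative r \<phi> ^ (2 * k + 1) * w \<phi>) (at \<phi>)"
    and w: "\<And>\<phi>. \<phi> > \<phi>1 \<Longrightarrow> - 3 * b / 2 \<le> w \<phi> \<and> w \<phi> \<le> - b / 2"
    and "\<phi> \<ge> \<phi>1"
  shows "inverse (r \<phi>1) ^ (2 * k) + real k * b * (\<phi> - \<phi>1) \<le> inverse (r \<phi>) ^ (2 * k)
       \<and> inverse (r \<phi>) ^ (2 * k) \<le> inverse (r \<phi>1) ^ (2 * k) + 3 * real k * b * (\<phi> - \<phi>1)"
proof -
  define v where "v x = inverse (r x) ^ (2 * k)" for x
  have v_der: "(v has_real_derivative (- 2 * real k * w x)) (at x)" if "x > \<phi>1" for x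
  proof -
    have "r x \<noteq> 0" using pos[of x] that by simp
    note d = DERIV_power[OF DERIV_inverse_fun[OF der[OF that] \<open>r x \<noteq> 0\<close>], of "2 * k"]
    have "r x ^ (2 * k + 1) * inverse (r x ^ 2) * inverse (r x) ^ (2 * k - 1) = 1"
      using \<open>r x \<noteq> 0\<close> \<open>k \<ge> 1\<close>
      by (simp add: power_inverse[symmetric] power_add[symmetric] field_simps)
    then have "of_nat (2 * k) * (- (r x ^ (2 * k + 1) * w x * inverse (r x ^ Suc (Suc 0))) * inverse (r x) ^ (2 * k - Suc 0))
        = - 2 * real k * w x"
      by (simp add: algebra_simps numeral_2_eq_2)
    then show ?thesis unfolding v_def by (rule DERIV_cong[OF d])
  qed
  have v_cont: "continuous_on {\<phi>1..\<phi>} v" unfolding v_def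
    by (intro continuous_intros continuous_on_subset[OF cont]) (use pos in \<open>auto simp: less_le\<close>)
  have "(\<lambda>x. v x - real k * b * x) \<phi>1 \<le> (\<lambda>x. v x - real k * b * x) \<phi>"
  proof (rule DERIV_nonneg_imp_le[OF \<open>\<phi> \<ge> \<phi>1\<close>])
    show "continuous_on {\<phi>1..\<phi>} (\<lambda>x. v x - real k * b * x)" by (intro continuous_intros v_cont)
    show "((\<lambda>x. v x - real k * b * x) has_real_derivative (- 2 * real k * w x - real k * b)) (at x)"
      if "\<phi>1 < x" "x < \<phi>" for x
      using v_der[OF that(1)] by (auto intro!: derivative_eq_intros)
    show "0 \<le> - 2 * real k * w x - real k * b" if "\<phi>1 < x" "x < \<phi>" for x
      using w[OF that(1)] mult_nonneg_nonneg[of "real k" "- 2 * w x - b"] by (simp add: algebra_simps)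
  qed
  moreover have "(\<lambda>x. 3 * real k * b * x - v x) \<phi>1 \<le> (\<lambda>x. 3 * real k * b * x - v x) \<phi>"
  proof (rule DERIV_nonneg_imp_le[OF \<open>\<phi> \<ge> \<phi>1\<close>])
    show "continuous_on {\<phi>1..\<phi>} (\<lambda>x. 3 * real k * b * x - v x)" by (intro continuous_intros v_cont)
    show "((\<lambda>x. 3 * real k * b * x - v x) has_real_derivative (3 * real k * b + 2 * real k * w x)) (at x)"
      if "\<phi>1 < x" "x < \<phi>" for x
      using v_der[OF that(1)] by (auto intro!: derivative_eq_intros)
    show "0 \<le> 3 * real k * b + 2 * real k * w x" if "\<phi>1 < x" "x < \<phi>" for x
      using w[OF that(1)] mult_nonneg_nonneg[of "real k" "3 * b + 2 * w x"] by (simp add: algebra_simps)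
  qed
  ultimately show ?thesis unfolding v_def by (simp add: algebra_simps)
qed

text \<open>The rate of \<open>log (1/r)\<close> is \<open>b\<close> up to \<open>O(r\<^sup>2)\<close>; a first crude bound shows that \<open>r\<^sup>2\<close> decays
  exponentially, which makes that error integrable.\<close>
lemma inverse_exponential_solution_bounds:
  fixes r w :: "real \<Rightarrow> real"
  assumes "b > 0" and "K \<ge> 0"
    and cont: "continuous_on {\<phi>1..} r" and pos: "\<And>\<phi>. \<phi> \<ge> \<phi>1 \<Longrightarrow> r \<phi> > 0"
    and der: "\<And>\<phi>. \<phi> > \<phi>1 \<Longrightarrow> (r has_real_derivative r \<phi> * w \<phi>) (at \<phi>)"
    and w: "\<And>\<phi>. \<phi> > \<phi>1 \<Longrightarrow> w \<phi> \<le> - b / 2"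
    and w_close: "\<And>\<phi>. \<phi> > \<phi>1 \<Longrightarrow> \<bar>w \<phi> + b\<bar> \<le> K * (r \<phi>)\<^sup>2"
  shows "\<exists>c1>0. \<exists>c2>0. \<forall>\<phi>\<ge>\<phi>1. c1 * exp (b * \<phi>) \<le> inverse (r \<phi>) \<and> inverse (r \<phi>) \<le> c2 * exp (b * \<phi>)"
proof -
  define v where "v x = - ln (r x)" for x
  have v_der: "(v has_real_derivative - w x) (at x)" if "x > \<phi>1" for x
  proof -
    have "r x > 0" using pos that by simp
    have "((\<lambda>x. ln (r x)) has_real_derivative (1 / r x) * (r x * w x)) (at x)"
      by (rule DERIV_chain2[OF DERIV_ln_divide[OF \<open>r x > 0\<close>] der[OF that]])
    from DERIV_minus[OF this] show ?thesis unfolding v_def using \<open>r x > 0\<close> by simp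
  qed
  have v_cont: "continuous_on {\<phi>1..\<phi>} v" for \<phi> unfolding v_def
    by (intro continuous_intros continuous_on_subset[OF cont]) (use pos in \<open>auto simp: less_le\<close>)
  have crude: "v \<phi>1 + b / 2 * (\<phi> - \<phi>1) \<le> v \<phi>" if "\<phi> \<ge> \<phi>1" for \<phi>
  proof -
    have "(\<lambda>x. v x - b / 2 * x) \<phi>1 \<le> (\<lambda>x. v x - b / 2 * x) \<phi>"
    proof (rule DERIV_nonneg_imp_le[OF that])
      show "continuous_on {\<phi>1..\<phi>} (\<lambda>x. v x - b / 2 * x)" by (intro continuous_intros v_cont)
      show "((\<lambda>x. v x - b / 2 * x) has_real_derivative (- w x - b / 2)) (at x)" if "\<phi>1 < x" "x < \<phi>" for x
        using v_der[OF that(1)] by (auto intro!: derivative_eq_intros)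
      show "0 \<le> - w x - b / 2" if "\<phi>1 < x" "x < \<phi>" for x using w[OF that(1)] by simp
    qed
    then show ?thesis by (simp add: algebra_simps diff_divide_distrib)
  qed
  define D where "D = K * (r \<phi>1)\<^sup>2"
  have "D \<ge> 0" using \<open>K \<ge> 0\<close> by (simp add: D_def)
  have r_sq: "K * (r x)\<^sup>2 \<le> D * exp (- b * (x - \<phi>1))" if "x \<ge> \<phi>1" for x
  proof -
    have "r x = exp (- v x)" using pos[OF that] by (simp add: v_def)
    also have "\<dots> \<le> exp (- v \<phi>1 - b / 2 * (x - \<phi>1))" using crude[OF that] by simp
    also have "\<dots> = exp (ln (r \<phi>1)) * exp (- b / 2 * (x - \<phi>1))"
      unfolding exp_add[symmetric] by (simp add: v_def)
    also have "\<dots> = r \<phi>1 * exp (- b / 2 * (x - \<phi>1))" using pos[of \<phi>1] by simp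
    finally have "(r x)\<^sup>2 \<le> (r \<phi>1 * exp (- b / 2 * (x - \<phi>1)))\<^sup>2"
      using pos[OF that] by (intro power_mono) auto
    also have "\<dots> = (r \<phi>1)\<^sup>2 * exp (- b * (x - \<phi>1))"
      by (simp add: power_mult_distrib power2_eq_square exp_add[symmetric])
    finally show ?thesis unfolding D_def using \<open>K \<ge> 0\<close> by (simp add: mult_left_mono mult.assoc)
  qed
  have dev: "\<bar>v \<phi> - v \<phi>1 - b * (\<phi> - \<phi>1)\<bar> \<le> D / b" if "\<phi> \<ge> \<phi>1" for \<phi>
  proof (rule deviation_from_linear_growth[OF \<open>b > 0\<close> \<open>D \<ge> 0\<close> that v_cont v_der])
    show "\<bar>- w t - b\<bar> \<le> D * exp (- b * (t - \<phi>1))" if "\<phi>1 < t" "t < \<phi>" for t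
      using w_close[of t] r_sq[of t] that by (simp add: abs_minus_commute add.commute)
  qed simp
  define c0 where "c0 = v \<phi>1 - b * \<phi>1"
  show ?thesis
  proof (intro exI conjI allI impI)
    show "exp (c0 - D / b) > 0" "exp (c0 + D / b) > 0" by simp_all
    fix \<phi> assume "\<phi> \<ge> \<phi>1"
    have inv: "inverse (r \<phi>) = exp (v \<phi> - b * \<phi>) * exp (b * \<phi>)"
      using pos[OF \<open>\<phi> \<ge> \<phi>1\<close>] by (simp add: v_def exp_diff exp_minus)
    show "exp (c0 - D / b) * exp (b * \<phi>) \<le> inverse (r \<phi>)"
      unfolding inv using dev[OF \<open>\<phi> \<ge> \<phi>1\<close>] by (simp add: c0_def abs_le_iff algebra_simps)
    show "inverse (r \<phi>) \<le> exp (c0 + D / b) * exp (b * \<phi>)"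
      unfolding inv using dev[OF \<open>\<phi> \<ge> \<phi>1\<close>] by (simp add: c0_def abs_le_iff algebra_simps)
  qed
qed

lemma eventually_linear_bounds:
  fixes v :: "real \<Rightarrow> real"
  assumes "c1 > 0" "c2 > 0" "v \<phi>1 \<ge> 0"
    and affine: "\<And>\<phi>. \<phi> \<ge> \<phi>1 \<Longrightarrow> v \<phi>1 + c1 * (\<phi> - \<phi>1) \<le> v \<phi> \<and> v \<phi> \<le> v \<phi>1 + c2 * (\<phi> - \<phi>1)"
  obtains A B T where "A > 0" "B > 0" "T \<ge> 1" "T > \<phi>1" "\<And>\<phi>. \<phi> \<ge> T \<Longrightarrow> A * \<phi> \<le> v \<phi> \<and> v \<phi> \<le> B * \<phi>"
proof
  define B where "B = v \<phi>1 + c2 * \<bar>\<phi>1\<bar> + c2"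
  define T where "T = max 1 (2 * \<bar>\<phi>1\<bar>) + 1"
  show "c1 / 2 > 0" "B > 0" "T \<ge> 1" "T > \<phi>1" using assms by (auto simp: B_def T_def add_nonneg_pos)
  fix \<phi> assume "\<phi> \<ge> T"
  then have "\<phi> \<ge> 1" "\<phi> / 2 \<le> \<phi> - \<phi>1" "\<phi> \<ge> \<phi>1" by (auto simp: T_def)
  have "c1 / 2 * \<phi> \<le> c1 * (\<phi> - \<phi>1)" using \<open>\<phi> / 2 \<le> \<phi> - \<phi>1\<close> \<open>c1 > 0\<close>
    by (smt (verit) mult_left_mono times_divide_eq_left mult.commute)
  moreover have "c2 * (\<phi> - \<phi>1) \<le> c2 * (\<bar>\<phi>1\<bar> + \<phi>)" using \<open>c2 > 0\<close> by (intro mult_left_mono) auto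
  moreover have "v \<phi>1 + c2 * \<bar>\<phi>1\<bar> \<le> (v \<phi>1 + c2 * \<bar>\<phi>1\<bar>) * \<phi>"
    using mult_left_mono[OF \<open>\<phi> \<ge> 1\<close>, of "v \<phi>1 + c2 * \<bar>\<phi>1\<bar>"] assms by simp
  ultimately show "c1 / 2 * \<phi> \<le> v \<phi> \<and> v \<phi> \<le> B * \<phi>"
    using affine[OF \<open>\<phi> \<ge> \<phi>1\<close>] \<open>v \<phi>1 \<ge> 0\<close> by (simp add: B_def algebra_simps)
qed

lemma powr_bounds_of_power_bounds:
  fixes x \<phi> A B :: real and k :: nat
  defines "\<alpha> \<equiv> 1 / (2 * real k)"
  assumes "k \<ge> 1" "x > 0" "\<phi> > 0" "A > 0" "B > 0"
    and bounds: "A * \<phi> \<le> inverse x ^ (2 * k)" "inverse x ^ (2 * k) \<le> B * \<phi>"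
  shows "A powr \<alpha> * \<phi> powr \<alpha> \<le> inverse x" "inverse x \<le> B powr \<alpha> * \<phi> powr \<alpha>"
    and "B powr (- \<alpha>) * \<phi> powr (- \<alpha>) \<le> x" "x \<le> A powr (- \<alpha>) * \<phi> powr (- \<alpha>)"
    and "x ^ (2 * k + 1) \<le> A powr (- \<alpha>) / A * \<phi> powr (- \<alpha> - 1)"
proof -
  have "\<alpha> > 0" using \<open>k \<ge> 1\<close> by (simp add: \<alpha>_def)
  have inv: "inverse x = (inverse x ^ (2 * k)) powr \<alpha>"
    using \<open>x > 0\<close> \<open>k \<ge> 1\<close> by (simp add: \<alpha>_def powr_realpow[symmetric] powr_powr)
  then have x: "x = (inverse x ^ (2 * k)) powr (- \<alpha>)"
    by (metis inverse_inverse_eq powr_minus)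
  have pos: "inverse x ^ (2 * k) > 0" using \<open>x > 0\<close> by simp
  show "A powr \<alpha> * \<phi> powr \<alpha> \<le> inverse x" "inverse x \<le> B powr \<alpha> * \<phi> powr \<alpha>"
    using bounds \<open>\<alpha> > 0\<close> \<open>A > 0\<close> \<open>B > 0\<close> \<open>\<phi> > 0\<close> pos
    by (subst inv, simp add: powr_mult[symmetric] powr_mono2)+
  show "B powr (- \<alpha>) * \<phi> powr (- \<alpha>) \<le> x" "x \<le> A powr (- \<alpha>) * \<phi> powr (- \<alpha>)"
    using bounds \<open>\<alpha> > 0\<close> \<open>A > 0\<close> \<open>B > 0\<close> \<open>\<phi> > 0\<close> pos
    by (subst x, simp add: powr_mult[symmetric] powr_mono2')+
  have "x ^ (2 * k) \<le> inverse (A * \<phi>)"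
    using le_imp_inverse_le[OF bounds(1)] \<open>A > 0\<close> \<open>\<phi> > 0\<close> by (simp add: power_inverse)
  moreover note \<open>x \<le> A powr (- \<alpha>) * \<phi> powr (- \<alpha>)\<close>
  ultimately have "x * x ^ (2 * k) \<le> A powr (- \<alpha>) * \<phi> powr (- \<alpha>) * inverse (A * \<phi>)"
    using \<open>x > 0\<close> by (intro mult_mono) auto
  also have "\<dots> = A powr (- \<alpha>) / A * \<phi> powr (- \<alpha> - 1)"
    using \<open>\<phi> > 0\<close> by (simp add: powr_diff field_simps)
  finally show "x ^ (2 * k + 1) \<le> A powr (- \<alpha>) / A * \<phi> powr (- \<alpha> - 1)" by simp
qed

lemma bounded_spiral_image:
  assumes "\<And>\<phi>. \<phi> \<in> S \<Longrightarrow> 0 \<le> r \<phi> \<and> r \<phi> \<le> R"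
  shows "bounded (spiral r ` S)"
  unfolding bounded_iff using assms norm_spiral by fastforce

text \<open>\<open>r = 1/\<rho>\<close> for a trajectory \<open>\<rho>\<close> that stays away from the origin and escapes to infinity.\<close>
locale escaping_normal_form_solution =
  fixes a :: "nat \<Rightarrow> real" and l :: nat and r :: "real \<Rightarrow> real" and \<phi>0 R :: real
  assumes pos: "\<And>\<phi>. \<phi> \<ge> \<phi>0 \<Longrightarrow> r \<phi> > 0"
    and le_R: "\<And>\<phi>. \<phi> \<ge> \<phi>0 \<Longrightarrow> r \<phi> \<le> R"
    and der: "\<And>\<phi>. \<phi> \<ge> \<phi>0 \<Longrightarrow>
      (r has_real_derivative r \<phi> * normal_form_poly a l (r \<phi>)) (at \<phi> within {\<phi>0..})"
    and small: "\<And>\<delta>. \<delta> > 0 \<Longrightarrow> \<exists>\<phi>\<ge>\<phi>0. r \<phi> < \<delta>"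
begin

lemma continuous_on: "continuous_on {\<phi>0..} r"
  by (rule DERIV_continuous_on[OF der]) auto

lemma bounded_image: "bounded (spiral r ` {\<phi>0..})"
  using pos le_R by (intro bounded_spiral_image) (auto intro: less_imp_le)

lemma lipschitz:
  obtains L where "L > 0" "\<And>x y. x \<ge> \<phi>0 \<Longrightarrow> y \<ge> \<phi>0 \<Longrightarrow> dist (spiral r x) (spiral r y) \<le> L * \<bar>x - y\<bar>"
proof -
  define P where "P = (\<Sum>j\<le>l. \<bar>a j\<bar> * (max 1 R) ^ (2 * j))"
  have "P \<ge> 0" "R > 0" using pos[of \<phi>0] le_R[of \<phi>0] by (auto simp: P_def intro: sum_nonneg)
  have "\<bar>r \<phi> * normal_form_poly a l (r \<phi>)\<bar> \<le> R * P" if "\<phi> \<ge> \<phi>0" for \<phi>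
    using pos[OF that] le_R[OF that] abs_normal_form_poly_le[of "r \<phi>" R a l] \<open>P \<ge> 0\<close>
    by (simp add: P_def abs_mult mult_mono)
  then have "dist (spiral r x) (spiral r y) \<le> (R * P + R) * \<bar>x - y\<bar>" if "x \<ge> \<phi>0" "y \<ge> \<phi>0" for x y
    using pos le_R by (intro spiral_lipschitz[OF der _ _ that]) (auto simp: less_imp_le)
  moreover have "R * P + R > 0" using \<open>P \<ge> 0\<close> \<open>R > 0\<close> by (simp add: add_nonneg_pos)
  ultimately show thesis using that by blast
qed

lemma has_real_derivative_reduced:
  assumes "k \<le> l" "\<forall>j<k. a j = 0" "\<phi> > \<phi>0"
  shows "(r has_real_derivative r \<phi> ^ (2 * k + 1) * reduced_normal_form_poly a k l (r \<phi>)) (at \<phi>)"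
proof -
  have "(r has_real_derivative r \<phi> * normal_form_poly a l (r \<phi>)) (at \<phi>)"
    using der[of \<phi>] assms(3) at_within_interior[of \<phi> "{\<phi>0..}"] by auto
  then show ?thesis using normal_form_poly_eq_reduced[OF assms(1,2)] by (simp add: algebra_simps)
qed

lemma leading_coeff:
  assumes "k \<le> l" "\<forall>j<k. a j = 0" "a k \<noteq> 0"
  obtains \<phi>1 K where "a k < 0" "\<phi>1 \<ge> \<phi>0" "K \<ge> 0"
    and "\<And>\<phi>. \<phi> \<ge> \<phi>1 \<Longrightarrow> \<bar>reduced_normal_form_poly a k l (r \<phi>) - a k\<bar> \<le> K * (r \<phi>)\<^sup>2"
    and "\<And>\<phi>. \<phi> \<ge> \<phi>1 \<Longrightarrow> K * (r \<phi>)\<^sup>2 \<le> \<bar>a k\<bar> / 2"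
proof -
  obtain m K where m: "0 < m" "0 \<le> K"
    and near: "\<And>x. 0 \<le> x \<Longrightarrow> x \<le> m \<Longrightarrow> \<bar>reduced_normal_form_poly a k l x - a k\<bar> \<le> K * x\<^sup>2"
      "\<And>x. 0 \<le> x \<Longrightarrow> x \<le> m \<Longrightarrow> K * x\<^sup>2 \<le> \<bar>a k\<bar> / 2"
    using reduced_normal_form_poly_near_zero[of k l a, OF assms(1,3)] by blast
  have "\<bar>reduced_normal_form_poly a k l x - a k\<bar> \<le> \<bar>a k\<bar> / 2" if "0 \<le> x" "x \<le> m" for x
    using near[OF that] by (rule order.trans)
  then have "a k < 0 \<and> (\<exists>\<phi>1\<ge>\<phi>0. \<forall>\<phi>\<ge>\<phi>1. r \<phi> \<le> m)"
    by (intro escaping_solution_leading_coeff[OF assms m(1) _ pos der small])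
  then obtain \<phi>1 where "a k < 0" "\<phi>1 \<ge> \<phi>0" and le_m: "\<And>\<phi>. \<phi> \<ge> \<phi>1 \<Longrightarrow> r \<phi> \<le> m" by blast
  have "0 \<le> r \<phi>" "r \<phi> \<le> m" if "\<phi> \<ge> \<phi>1" for \<phi>
    using pos[of \<phi>] le_m[OF that] that \<open>\<phi>1 \<ge> \<phi>0\<close> by simp_all
  with \<open>a k < 0\<close> \<open>\<phi>1 \<ge> \<phi>0\<close> \<open>K \<ge> 0\<close> near show thesis by (intro that) auto
qed

lemma box_dim_exponential_case:
  assumes "a 0 \<noteq> 0"
  shows "comparable (\<lambda>\<phi>. inverse (r \<phi>)) (\<lambda>\<phi>. exp (- a 0 * \<phi>)) at_top
     \<and> lower_box_dim (spiral r ` {\<phi>0..}) = 1 \<and> upper_box_dim (spiral r ` {\<phi>0..}) = 1"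
proof -
  define W where "W = reduced_normal_form_poly a 0 l"
  obtain \<phi>1 K where "a 0 < 0" "\<phi>1 \<ge> \<phi>0" "K \<ge> 0"
    and W: "\<And>\<phi>. \<phi> \<ge> \<phi>1 \<Longrightarrow> \<bar>W (r \<phi>) - a 0\<bar> \<le> K * (r \<phi>)\<^sup>2" "\<And>\<phi>. \<phi> \<ge> \<phi>1 \<Longrightarrow> K * (r \<phi>)\<^sup>2 \<le> \<bar>a 0\<bar> / 2"
    unfolding W_def by (rule leading_coeff[of 0]) (use assms in auto)
  define b where "b = - a 0"
  have "b > 0" using \<open>a 0 < 0\<close> by (simp add: b_def)
  obtain c1 c2 where "c1 > 0" "c2 > 0"
    and bounds: "\<And>\<phi>. \<phi> \<ge> \<phi>1 \<Longrightarrow> c1 * exp (b * \<phi>) \<le> inverse (r \<phi>) \<and> inverse (r \<phi>) \<le> c2 * exp (b * \<phi>)"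
  proof -
    have "\<exists>c1>0. \<exists>c2>0. \<forall>\<phi>\<ge>\<phi>1. c1 * exp (b * \<phi>) \<le> inverse (r \<phi>) \<and> inverse (r \<phi>) \<le> c2 * exp (b * \<phi>)"
    proof (rule inverse_exponential_solution_bounds[OF \<open>b > 0\<close> \<open>K \<ge> 0\<close>])
      show "continuous_on {\<phi>1..} r" by (rule continuous_on_subset[OF continuous_on]) (use \<open>\<phi>1 \<ge> \<phi>0\<close> in auto)
      show "\<And>\<phi>. \<phi>1 \<le> \<phi> \<Longrightarrow> 0 < r \<phi>" using pos \<open>\<phi>1 \<ge> \<phi>0\<close> by auto
      show "(r has_real_derivative r \<phi> * W (r \<phi>)) (at \<phi>)" if "\<phi> > \<phi>1" for \<phi>
        using has_real_derivative_reduced[of 0 \<phi>] that \<open>\<phi>1 \<ge> \<phi>0\<close> by (simp add: W_def)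
      show "\<bar>W (r \<phi>) + b\<bar> \<le> K * (r \<phi>)\<^sup>2" if "\<phi> > \<phi>1" for \<phi>
        using W(1)[of \<phi>] that by (simp add: b_def)
      show "W (r \<phi>) \<le> - b / 2" if "\<phi> > \<phi>1" for \<phi>
        using W[of \<phi>] that \<open>a 0 < 0\<close> unfolding b_def by arith
    qed
    then show thesis using that by blast
  qed
  have "comparable (\<lambda>\<phi>. inverse (r \<phi>)) (\<lambda>\<phi>. exp (- a 0 * \<phi>)) at_top"
    unfolding comparable_def using \<open>c1 > 0\<close> \<open>c2 > 0\<close> bounds
    by (intro exI[of _ c1] exI[of _ c2] conjI eventually_at_top_linorderI[of \<phi>1]) (auto simp: b_def)
  have decay: "r \<phi> \<le> 1 / c1 * exp (- b * \<phi>)" if "\<phi> \<ge> \<phi>1" for \<phi>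
  proof -
    have "c1 * exp (b * \<phi>) \<le> inverse (r \<phi>)" using bounds[OF that] by simp
    then have "r \<phi> \<le> inverse (c1 * exp (b * \<phi>))" using pos[of \<phi>] that \<open>\<phi>1 \<ge> \<phi>0\<close> \<open>c1 > 0\<close>
      by (metis inverse_inverse_eq le_imp_inverse_le mult_pos_pos exp_gt_zero order.trans)
    then show ?thesis by (simp add: exp_minus field_simps)
  qed
  have lim: "(r \<longlongrightarrow> 0) at_top"
  proof (rule tendsto_sandwich[of "\<lambda>_. 0" _ _ "\<lambda>\<phi>. 1 / c1 * exp (- b * \<phi>)"])
    show "eventually (\<lambda>\<phi>. 0 \<le> r \<phi>) at_top"
      using eventually_ge_at_top[of \<phi>0] by eventually_elim (use pos in \<open>auto intro: less_imp_le\<close>)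
    show "eventually (\<lambda>\<phi>. r \<phi> \<le> 1 / c1 * exp (- b * \<phi>)) at_top"
      using eventually_ge_at_top[of \<phi>1] by eventually_elim (use decay in auto)
    show "((\<lambda>\<phi>. 1 / c1 * exp (- b * \<phi>)) \<longlongrightarrow> 0) at_top" using \<open>b > 0\<close> by real_asymp
  qed simp
  obtain L where "L > 0"
    and lip: "\<And>x y. x \<ge> \<phi>0 \<Longrightarrow> y \<ge> \<phi>0 \<Longrightarrow> dist (spiral r x) (spiral r y) \<le> L * \<bar>x - y\<bar>"
    using lipschitz by blast
  have "1 / c1 > 0" using \<open>c1 > 0\<close> by simp
  from box_dim_exponential_spiral[OF \<open>L > 0\<close> lip pos continuous_on lim \<open>b > 0\<close> this decay bounded_image]
  show ?thesis using \<open>comparable (\<lambda>\<phi>. inverse (r \<phi>)) (\<lambda>\<phi>. exp (- a 0 * \<phi>)) at_top\<close> by blast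
qed

lemma box_dim_power_case:
  assumes "1 \<le> k" "k \<le> l" "\<forall>j<k. a j = 0" "a k \<noteq> 0"
  shows "comparable (\<lambda>\<phi>. inverse (r \<phi>)) (\<lambda>\<phi>. \<bar>\<phi>\<bar> powr (1 / (2 * real k))) at_top
     \<and> lower_box_dim (spiral r ` {\<phi>0..}) = 4 * real k / (2 * real k + 1)
     \<and> upper_box_dim (spiral r ` {\<phi>0..}) = 4 * real k / (2 * real k + 1)"
proof -
  define W where "W \<phi> = reduced_normal_form_poly a k l (r \<phi>)" for \<phi>
  obtain \<phi>1 K where "a k < 0" "\<phi>1 \<ge> \<phi>0" "K \<ge> 0"
    and W_approx: "\<And>\<phi>. \<phi> \<ge> \<phi>1 \<Longrightarrow> \<bar>W \<phi> - a k\<bar> \<le> K * (r \<phi>)\<^sup>2"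
    and small_error: "\<And>\<phi>. \<phi> \<ge> \<phi>1 \<Longrightarrow> K * (r \<phi>)\<^sup>2 \<le> \<bar>a k\<bar> / 2"
    unfolding W_def by (rule leading_coeff[OF assms(2-4)]) blast
  have W: "\<bar>W \<phi> - a k\<bar> \<le> \<bar>a k\<bar> / 2" if "\<phi> \<ge> \<phi>1" for \<phi>
    using W_approx[OF that] small_error[OF that] by linarith
  define b where "b = - a k"
  have "b > 0" using \<open>a k < 0\<close> by (simp add: b_def)
  have W_bounds: "- 3 * b / 2 \<le> W \<phi> \<and> W \<phi> \<le> - b / 2" if "\<phi> \<ge> \<phi>1" for \<phi>
    using W[OF that] \<open>a k < 0\<close> by (auto simp: b_def abs_le_iff)
  have der_at: "(r has_real_derivative r \<phi> ^ (2 * k + 1) * W \<phi>) (at \<phi>)" if "\<phi> > \<phi>1" for \<phi>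
    using has_real_derivative_reduced[OF assms(2,3)] that \<open>\<phi>1 \<ge> \<phi>0\<close> by (simp add: W_def)
  define v where "v \<phi> = inverse (r \<phi>) ^ (2 * k)" for \<phi>
  have affine: "v \<phi>1 + real k * b * (\<phi> - \<phi>1) \<le> v \<phi> \<and> v \<phi> \<le> v \<phi>1 + 3 * real k * b * (\<phi> - \<phi>1)"
    if "\<phi> \<ge> \<phi>1" for \<phi>
    unfolding v_def
  proof (rule inverse_power_solution_bounds[OF assms(1) _ _ der_at _ that])
    show "continuous_on {\<phi>1..} r" by (rule continuous_on_subset[OF continuous_on]) (use \<open>\<phi>1 \<ge> \<phi>0\<close> in auto)
    show "\<And>\<phi>. \<phi>1 \<le> \<phi> \<Longrightarrow> 0 < r \<phi>" using pos \<open>\<phi>1 \<ge> \<phi>0\<close> by auto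
    show "\<And>\<phi>. \<phi>1 < \<phi> \<Longrightarrow> - 3 * b / 2 \<le> W \<phi> \<and> W \<phi> \<le> - b / 2" using W_bounds by auto
  qed
  have "real k * b > 0" "3 * real k * b > 0" "v \<phi>1 \<ge> 0"
    using \<open>b > 0\<close> assms(1) by (simp_all add: v_def)
  then obtain A B T where "A > 0" "B > 0" "T \<ge> 1" "T > \<phi>1"
    and lin: "\<And>\<phi>. \<phi> \<ge> T \<Longrightarrow> A * \<phi> \<le> v \<phi> \<and> v \<phi> \<le> B * \<phi>"
    using eventually_linear_bounds[OF _ _ _ affine] by blast
  define \<alpha> where "\<alpha> = 1 / (2 * real k)"
  have \<alpha>: "0 < \<alpha>" "\<alpha> < 1" using assms(1) by (auto simp: \<alpha>_def)
  note powr_bounds = powr_bounds_of_power_bounds[OF assms(1) pos _ \<open>A > 0\<close> \<open>B > 0\<close>, folded \<alpha>_def]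
  have r_bounds: "A powr \<alpha> * \<phi> powr \<alpha> \<le> inverse (r \<phi>) \<and> inverse (r \<phi>) \<le> B powr \<alpha> * \<phi> powr \<alpha>
      \<and> B powr (- \<alpha>) * \<phi> powr (- \<alpha>) \<le> r \<phi> \<and> r \<phi> \<le> A powr (- \<alpha>) * \<phi> powr (- \<alpha>)
      \<and> r \<phi> ^ (2 * k + 1) \<le> A powr (- \<alpha>) / A * \<phi> powr (- \<alpha> - 1)" if "\<phi> \<ge> T" for \<phi>
    using powr_bounds[of \<phi>] lin[OF that] that \<open>T \<ge> 1\<close> \<open>T > \<phi>1\<close> \<open>\<phi>1 \<ge> \<phi>0\<close> by (simp add: v_def)
  have "comparable (\<lambda>\<phi>. inverse (r \<phi>)) (\<lambda>\<phi>. \<bar>\<phi>\<bar> powr (1 / (2 * real k))) at_top"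
    unfolding comparable_def using r_bounds \<open>A > 0\<close> \<open>B > 0\<close> \<open>T \<ge> 1\<close>
    by (intro exI[of _ "A powr \<alpha>"] exI[of _ "B powr \<alpha>"] conjI eventually_at_top_linorderI[of T])
      (auto simp: \<alpha>_def)
  moreover have "lower_box_dim (spiral r ` {\<phi>0..}) = 2 / (1 + \<alpha>) \<and> upper_box_dim (spiral r ` {\<phi>0..}) = 2 / (1 + \<alpha>)"
  proof -
    obtain L where "L > 0"
      and lip: "\<And>x y. x \<ge> \<phi>0 \<Longrightarrow> y \<ge> \<phi>0 \<Longrightarrow> dist (spiral r x) (spiral r y) \<le> L * \<bar>x - y\<bar>"
      using lipschitz by blast
    have der_bound: "\<bar>r \<phi> ^ (2 * k + 1) * W \<phi>\<bar> \<le> (3 * b / 2 * (A powr (- \<alpha>) / A)) * \<phi> powr (- \<alpha> - 1)"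
      if "\<phi> \<ge> T" for \<phi>
    proof -
      have "\<bar>r \<phi> ^ (2 * k + 1) * W \<phi>\<bar> = r \<phi> ^ (2 * k + 1) * \<bar>W \<phi>\<bar>"
        using pos[of \<phi>] that \<open>T > \<phi>1\<close> \<open>\<phi>1 \<ge> \<phi>0\<close> by (simp add: abs_mult)
      also have "\<dots> \<le> A powr (- \<alpha>) / A * \<phi> powr (- \<alpha> - 1) * (3 * b / 2)"
        using r_bounds[OF that] W_bounds[of \<phi>] that \<open>T > \<phi>1\<close> \<open>A > 0\<close>
        by (intro mult_mono) auto
      finally show ?thesis by (simp add: algebra_simps)
    qed
    have "T \<ge> \<phi>0" "3 * b / 2 * (A powr (- \<alpha>) / A) > 0" "B powr (- \<alpha>) > 0" "A powr (- \<alpha>) > 0"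
      using \<open>A > 0\<close> \<open>B > 0\<close> \<open>b > 0\<close> \<open>T > \<phi>1\<close> \<open>\<phi>1 \<ge> \<phi>0\<close> by auto
    moreover have "(r has_real_derivative r \<phi> ^ (2 * k + 1) * W \<phi>) (at \<phi>)" if "\<phi> \<ge> T" for \<phi>
      using der_at that \<open>T > \<phi>1\<close> by simp
    moreover have "B powr (- \<alpha>) * \<phi> powr (- \<alpha>) \<le> r \<phi> \<and> r \<phi> \<le> A powr (- \<alpha>) * \<phi> powr (- \<alpha>)"
      if "\<phi> \<ge> T" for \<phi>
      using r_bounds[OF that] by blast
    ultimately show ?thesis
      using box_dim_power_spiral[OF \<open>L > 0\<close> lip \<alpha> \<open>T \<ge> 1\<close> _ _ _ _ pos _ _ der_bound bounded_image]
      by blast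
  qed
  moreover have "2 / (1 + \<alpha>) = 4 * real k / (2 * real k + 1)" using assms(1) by (simp add: \<alpha>_def field_simps)
  ultimately show ?thesis by simp
qed

end

section \<open>Trajectories near infinity\<close>

lemma distr_lborel_cnj: "distr lborel borel cnj = (lborel :: complex measure)"
proof -
  define c where "c j = (if j = \<i> then -1 else (1::real))" for j :: complex
  have affine: "(\<lambda>x. 0 + (\<Sum>j\<in>Basis. (c j * (x \<bullet> j)) *\<^sub>R j)) = cnj"
    by (auto simp: Basis_complex_def c_def inner_complex_def complex_eq_iff)
  have "(\<Prod>j\<in>Basis. \<bar>c j\<bar>) = 1" by (auto simp: Basis_complex_def c_def)
  then have "lborel = density (distr lborel borel cnj) (\<lambda>_. 1)"
    using lborel_affine_euclidean[of c 0] unfolding affine by (simp add: c_def)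
  then show ?thesis by (simp add: density_1)
qed

lemma measure_lebesgue_cnj_open:
  assumes "open S"
  shows "measure lebesgue (cnj ` S) = measure lebesgue S"
proof -
  have vimage: "cnj ` S = cnj -` S" by (auto simp: image_iff) (metis complex_cnj_cnj)
  have "open (cnj ` S)" unfolding vimage by (intro open_vimage assms) auto
  then have "measure lebesgue (cnj ` S) = measure (distr lborel borel cnj) S"
    unfolding vimage using assms
    by (subst measure_distr) (auto simp: measure_completion borel_open intro!: borel_measurable_continuous_onI continuous_intros)
  also have "\<dots> = measure lebesgue S" using assms by (simp add: distr_lborel_cnj measure_completion borel_open)
  finally show ?thesis .
qed

lemma eps_nbhd_cnj: "eps_nbhd (cnj ` B) e = cnj ` eps_nbhd B e"
proof -
  have dist_cnj: "dist (cnj x) (cnj y) = dist x y" for x y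
    by (simp add: dist_norm flip: complex_cnj_diff)
  show ?thesis
  proof
    show "eps_nbhd (cnj ` B) e \<subseteq> cnj ` eps_nbhd B e"
    proof
      fix z assume "z \<in> eps_nbhd (cnj ` B) e"
      then obtain x where "x \<in> B" "dist (cnj x) z < e" unfolding eps_nbhd_def by auto
      then have "cnj z \<in> eps_nbhd B e" using dist_cnj[of x "cnj z"] unfolding eps_nbhd_def by auto
      then show "z \<in> cnj ` eps_nbhd B e" by (metis complex_cnj_cnj image_eqI)
    qed
    show "cnj ` eps_nbhd B e \<subseteq> eps_nbhd (cnj ` B) e"
      using dist_cnj unfolding eps_nbhd_def by fastforce
  qed
qed

lemma box_dim_cnj:
  "lower_box_dim (cnj ` B) = lower_box_dim B" "upper_box_dim (cnj ` B) = upper_box_dim B"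
  unfolding lower_box_dim_def upper_box_dim_def eps_nbhd_cnj
  by (simp_all add: measure_lebesgue_cnj_open eps_nbhd_open)

lemma inversion_spiral:
  assumes "\<And>\<phi>. \<phi> \<in> S \<Longrightarrow> \<rho> \<phi> > 0"
  shows "inversion ` spiral \<rho> ` S = spiral (\<lambda>\<phi>. inverse (\<rho> \<phi>)) ` S"
  unfolding image_image using assms
  by (intro image_cong refl) (simp add: inversion_def spiral_def norm_mult power2_eq_square field_simps)

lemma comparable_at_bot_iff:
  "comparable F G at_bot \<longleftrightarrow> comparable (\<lambda>\<psi>. F (- \<psi>)) (\<lambda>\<psi>. G (- \<psi>)) at_top"
  by (simp add: comparable_def at_bot_mirror eventually_filtermap)

lemma trajectory_bounds:
  assumes "\<And>\<phi>. \<phi> \<in> I \<Longrightarrow> \<rho> \<phi> > 0" "\<not> bounded (spiral \<rho> ` I)" "0 \<notin> closure (spiral \<rho> ` I)"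
  obtains \<delta> where "\<delta> > 0" "\<And>\<phi>. \<phi> \<in> I \<Longrightarrow> \<delta> \<le> \<rho> \<phi>" "\<And>M. \<exists>\<phi>\<in>I. M < \<rho> \<phi>"
proof -
  have norm: "norm (spiral \<rho> \<phi>) = \<rho> \<phi>" if "\<phi> \<in> I" for \<phi>
    using assms(1)[OF that] by (simp add: norm_spiral)
  obtain \<delta> where "\<delta> > 0" "\<And>z. z \<in> spiral \<rho> ` I \<Longrightarrow> \<delta> \<le> dist z 0"
    using assms(3) unfolding closure_approachable by (meson not_le)
  then have "\<delta> \<le> \<rho> \<phi>" if "\<phi> \<in> I" for \<phi> using norm[OF that] that by force
  moreover have "\<exists>\<phi>\<in>I. M < \<rho> \<phi>" for M
  proof (rule ccontr)
    assume "\<not> (\<exists>\<phi>\<in>I. M < \<rho> \<phi>)"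
    then have "\<forall>z\<in>spiral \<rho> ` I. norm z \<le> M" using norm by (auto simp: not_less)
    then show False using assms(2) by (auto simp: bounded_iff)
  qed
  ultimately show thesis using that \<open>\<delta> > 0\<close> by blast
qed

lemma has_real_derivative_inverse_trajectory:
  assumes "(\<rho> has_real_derivative - \<rho> \<phi> * (\<Sum>j\<le>l. a j * inverse (\<rho> \<phi>) ^ (2 * j))) (at \<phi> within S)"
    and "\<rho> \<phi> \<noteq> 0"
  shows "((\<lambda>\<phi>. inverse (\<rho> \<phi>)) has_real_derivative
    inverse (\<rho> \<phi>) * normal_form_poly a l (inverse (\<rho> \<phi>))) (at \<phi> within S)"
proof (rule DERIV_cong[OF DERIV_inverse_fun[OF assms]])
  show "- (- \<rho> \<phi> * (\<Sum>j\<le>l. a j * inverse (\<rho> \<phi>) ^ (2 * j)) * inverse (\<rho> \<phi> ^ Suc (Suc 0)))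
      = inverse (\<rho> \<phi>) * normal_form_poly a l (inverse (\<rho> \<phi>))"
    using assms(2) by (simp add: normal_form_poly_def field_simps power2_eq_square)
qed

lemma box_dim_trajectory_at_top:
  fixes a :: "nat \<Rightarrow> real" and \<rho> :: "real \<Rightarrow> real"
  assumes \<rho>_pos: "\<And>\<phi>. \<phi> \<ge> \<phi>0 \<Longrightarrow> \<rho> \<phi> > 0"
    and \<rho>_der: "\<And>\<phi>. \<phi> \<ge> \<phi>0 \<Longrightarrow>
      (\<rho> has_real_derivative - \<rho> \<phi> * (\<Sum>j\<le>l. a j * inverse (\<rho> \<phi>) ^ (2 * j))) (at \<phi> within {\<phi>0..})"
    and "\<delta> > 0" and away: "\<And>\<phi>. \<phi> \<ge> \<phi>0 \<Longrightarrow> \<delta> \<le> \<rho> \<phi>" and unbounded: "\<And>M. \<exists>\<phi>\<ge>\<phi>0. M < \<rho> \<phi>"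
  shows "(a 0 \<noteq> 0 \<longrightarrow>
            comparable \<rho> (\<lambda>\<phi>. exp (- a 0 * \<phi>)) at_top
            \<and> lower_box_dim (inversion ` spiral \<rho> ` {\<phi>0..}) = 1
            \<and> upper_box_dim (inversion ` spiral \<rho> ` {\<phi>0..}) = 1)
       \<and> (\<forall>k. 1 \<le> k \<and> k \<le> l \<and> (\<forall>j<k. a j = 0) \<and> a k \<noteq> 0 \<longrightarrow>
            comparable \<rho> (\<lambda>\<phi>. \<bar>\<phi>\<bar> powr (1 / (2 * real k))) at_top
            \<and> lower_box_dim (inversion ` spiral \<rho> ` {\<phi>0..}) = 4 * real k / (2 * real k + 1)
            \<and> upper_box_dim (inversion ` spiral \<rho> ` {\<phi>0..}) = 4 * real k / (2 * real k + 1))"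
proof -
  define r where "r \<phi> = inverse (\<rho> \<phi>)" for \<phi>
  interpret escaping_normal_form_solution a l r \<phi>0 "inverse \<delta>"
  proof
    fix \<phi> assume "\<phi> \<ge> \<phi>0"
    show "r \<phi> > 0" using \<rho>_pos[OF \<open>\<phi> \<ge> \<phi>0\<close>] by (simp add: r_def)
    show "r \<phi> \<le> inverse \<delta>" using away[OF \<open>\<phi> \<ge> \<phi>0\<close>] \<open>\<delta> > 0\<close> by (simp add: r_def le_imp_inverse_le)
    show "(r has_real_derivative r \<phi> * normal_form_poly a l (r \<phi>)) (at \<phi> within {\<phi>0..})"
      unfolding r_def[abs_def] using \<rho>_der[OF \<open>\<phi> \<ge> \<phi>0\<close>] \<rho>_pos[OF \<open>\<phi> \<ge> \<phi>0\<close>]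
      by (intro has_real_derivative_inverse_trajectory) auto
  next
    fix e :: real assume "e > 0"
    obtain \<phi> where "\<phi> \<ge> \<phi>0" "inverse e < \<rho> \<phi>" using unbounded by blast
    moreover have "inverse (\<rho> \<phi>) < inverse (inverse e)"
      using \<open>e > 0\<close> \<open>inverse e < \<rho> \<phi>\<close> by (intro less_imp_inverse_less) auto
    ultimately show "\<exists>\<phi>\<ge>\<phi>0. r \<phi> < e" using \<open>e > 0\<close> by (auto simp: r_def)
  qed
  have "inversion ` spiral \<rho> ` {\<phi>0..} = spiral r ` {\<phi>0..}"
    unfolding r_def[abs_def] using \<rho>_pos by (intro inversion_spiral) auto
  moreover have "(\<lambda>\<phi>. inverse (r \<phi>)) = \<rho>" by (simp add: r_def)
  ultimately show ?thesis
    using box_dim_exponential_case box_dim_power_case by (simp only:) blast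
qed

lemma box_dim_trajectory_at_bot:
  fixes a :: "nat \<Rightarrow> real" and \<rho> :: "real \<Rightarrow> real"
  assumes pos: "\<And>\<phi>. \<phi> \<le> \<phi>0 \<Longrightarrow> \<rho> \<phi> > 0"
    and der: "\<And>\<phi>. \<phi> \<le> \<phi>0 \<Longrightarrow>
      (\<rho> has_real_derivative - \<rho> \<phi> * (\<Sum>j\<le>l. a j * inverse (\<rho> \<phi>) ^ (2 * j))) (at \<phi> within {..\<phi>0})"
    and "\<delta> > 0" and away: "\<And>\<phi>. \<phi> \<le> \<phi>0 \<Longrightarrow> \<delta> \<le> \<rho> \<phi>" and unbounded: "\<And>M. \<exists>\<phi>\<le>\<phi>0. M < \<rho> \<phi>"
  shows "(a 0 \<noteq> 0 \<longrightarrow>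
            comparable \<rho> (\<lambda>\<phi>. exp (- a 0 * \<phi>)) at_bot
            \<and> lower_box_dim (inversion ` spiral \<rho> ` {..\<phi>0}) = 1
            \<and> upper_box_dim (inversion ` spiral \<rho> ` {..\<phi>0}) = 1)
       \<and> (\<forall>k. 1 \<le> k \<and> k \<le> l \<and> (\<forall>j<k. a j = 0) \<and> a k \<noteq> 0 \<longrightarrow>
            comparable \<rho> (\<lambda>\<phi>. \<bar>\<phi>\<bar> powr (1 / (2 * real k))) at_bot
            \<and> lower_box_dim (inversion ` spiral \<rho> ` {..\<phi>0}) = 4 * real k / (2 * real k + 1)
            \<and> upper_box_dim (inversion ` spiral \<rho> ` {..\<phi>0}) = 4 * real k / (2 * real k + 1))"
proof -
  define \<rho>' where "\<rho>' \<psi> = \<rho> (- \<psi>)" for \<psi>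
  have reflect: "uminus ` {- \<phi>0..} = {..\<phi>0}" by (auto simp: image_iff intro: exI[of _ "- x" for x])
  have "(\<rho>' has_real_derivative - \<rho>' \<psi> * (\<Sum>j\<le>l. - a j * inverse (\<rho>' \<psi>) ^ (2 * j))) (at \<psi> within {- \<phi>0..})"
    if "\<psi> \<ge> - \<phi>0" for \<psi>
  proof -
    have "(\<rho> has_real_derivative - \<rho> (- \<psi>) * (\<Sum>j\<le>l. a j * inverse (\<rho> (- \<psi>)) ^ (2 * j)))
        (at (- \<psi>) within uminus ` {- \<phi>0..})"
      using der that unfolding reflect by auto
    from DERIV_image_chain[OF this DERIV_minus[OF DERIV_ident]]
    show ?thesis by (simp add: \<rho>'_def[abs_def] o_def sum_negf)
  qed
  moreover have "\<exists>\<psi>\<ge>- \<phi>0. M < \<rho>' \<psi>" for M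
    using unbounded[of M] by (auto simp: \<rho>'_def intro: exI[of _ "- x" for x])
  ultimately have top: "(- a 0 \<noteq> 0 \<longrightarrow>
            comparable \<rho>' (\<lambda>\<phi>. exp (- (- a 0) * \<phi>)) at_top
            \<and> lower_box_dim (inversion ` spiral \<rho>' ` {- \<phi>0..}) = 1
            \<and> upper_box_dim (inversion ` spiral \<rho>' ` {- \<phi>0..}) = 1)
       \<and> (\<forall>k. 1 \<le> k \<and> k \<le> l \<and> (\<forall>j<k. - a j = 0) \<and> - a k \<noteq> 0 \<longrightarrow>
            comparable \<rho>' (\<lambda>\<phi>. \<bar>\<phi>\<bar> powr (1 / (2 * real k))) at_top
            \<and> lower_box_dim (inversion ` spiral \<rho>' ` {- \<phi>0..}) = 4 * real k / (2 * real k + 1)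
            \<and> upper_box_dim (inversion ` spiral \<rho>' ` {- \<phi>0..}) = 4 * real k / (2 * real k + 1))"
    using pos away \<open>\<delta> > 0\<close> by (intro box_dim_trajectory_at_top[where \<delta> = \<delta>]) (auto simp: \<rho>'_def[abs_def])
  have "inversion ` spiral \<rho> ` {..\<phi>0} = spiral (\<lambda>\<phi>. inverse (\<rho> \<phi>)) ` uminus ` {- \<phi>0..}"
    unfolding reflect using pos by (intro inversion_spiral) auto
  also have "\<dots> = cnj ` spiral (\<lambda>\<psi>. inverse (\<rho>' \<psi>)) ` {- \<phi>0..}"
    unfolding image_image by (intro image_cong refl) (simp add: \<rho>'_def spiral_def cis_cnj)
  also have "\<dots> = cnj ` inversion ` spiral \<rho>' ` {- \<phi>0..}"
    using pos by (subst inversion_spiral) (auto simp: \<rho>'_def)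
  finally have inversion_image: "inversion ` spiral \<rho> ` {..\<phi>0} = cnj ` inversion ` spiral \<rho>' ` {- \<phi>0..}" .
  show ?thesis
    using top unfolding inversion_image comparable_at_bot_iff box_dim_cnj by (simp add: \<rho>'_def[abs_def])
qed

theorem theorem4p1:
  fixes l :: nat and a :: "nat \<Rightarrow> real" and \<rho> :: "real \<Rightarrow> real"
    and \<phi>0 :: real and up :: bool
  defines "I \<equiv> (if up then {\<phi>0..} else {..\<phi>0})"
  defines "\<Gamma> \<equiv> (\<lambda>\<phi>. complex_of_real (\<rho> \<phi>) * cis \<phi>) ` I"
  assumes "l \<ge> 1" and "a l = 1"
    and "\<forall>\<phi>\<in>I. \<rho> \<phi> > 0"
    and "\<forall>\<phi>\<in>I. (\<rho> has_real_derivative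
           (- \<rho> \<phi> * (\<Sum>j\<le>l. a j * inverse (\<rho> \<phi>) ^ (2 * j)))) (at \<phi> within I)"
    and "\<not> bounded \<Gamma>" and "0 \<notin> closure \<Gamma>"
  shows "(a 0 \<noteq> 0 \<longrightarrow>
            comparable \<rho> (\<lambda>\<phi>. exp (- a 0 * \<phi>)) (if up then at_top else at_bot)
            \<and> lower_box_dim (inversion ` \<Gamma>) = 1 \<and> upper_box_dim (inversion ` \<Gamma>) = 1)
       \<and> (\<forall>k. 1 \<le> k \<and> k \<le> l \<and> (\<forall>j<k. a j = 0) \<and> a k \<noteq> 0 \<longrightarrow>
            comparable \<rho> (\<lambda>\<phi>. \<bar>\<phi>\<bar> powr (1 / (2 * real k))) (if up then at_top else at_bot)
            \<and> lower_box_dim (inversion ` \<Gamma>) = 4 * real k / (2 * real k + 1)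
            \<and> upper_box_dim (inversion ` \<Gamma>) = 4 * real k / (2 * real k + 1))"
proof -
  have \<Gamma>: "\<Gamma> = spiral \<rho> ` I" by (simp add: \<Gamma>_def spiral_def[abs_def])
  obtain \<delta> where "\<delta> > 0" and away: "\<And>\<phi>. \<phi> \<in> I \<Longrightarrow> \<delta> \<le> \<rho> \<phi>"
    and unbounded: "\<And>M. \<exists>\<phi>\<in>I. M < \<rho> \<phi>"
    using trajectory_bounds[of I \<rho>] assms(5,7,8) unfolding \<Gamma> by blast
  show ?thesis
  proof (cases up)
    case True
    then have "I = {\<phi>0..}" by (simp add: I_def)
    then show ?thesis unfolding \<Gamma> using assms(5,6) away unbounded
      by (simp only: True if_True) (rule box_dim_trajectory_at_top[OF _ _ \<open>\<delta> > 0\<close>]; auto simp: Bex_def)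
  next
    case False
    then have "I = {..\<phi>0}" by (simp add: I_def)
    then show ?thesis unfolding \<Gamma> using assms(5,6) away unbounded
      by (simp only: False if_False) (rule box_dim_trajectory_at_bot[OF _ _ \<open>\<delta> > 0\<close>]; auto simp: Bex_def)
  qed
qed

end
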